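(* Let $\mathcal{B}=\langle V,F,E\rangle$ be any finite bipartite graph and $W\subseteq V$. Then Algorithm 3 (causal ordering via coarse decomposition) applied to $(W,\mathcal{B})$ is well-defined and its output directed cluster graph is unique, i.e. it does not depend on the choice of the maximum matching nor on the choices made in computing the causal ordering graph of the complete part.
   Context: A bipartite graph $\mathcal{B}=\langle V,F,E\rangle$ has disjoint vertex sets $V,F$ and undirected edges $(v-f)$, $v\in V$, $f\in F$; $\mathrm{adj}_{\mathcal{B}}(X)$ is the set of vertices adjacent to some vertex of $X$. $F'\subseteq F$ is self-contained if $|F'|=|\mathrm{adj}_{\mathcal{B}}(F')|$ and $|F''|\le|\mathrm{adj}_{\mathcal{B}}(F'')|$ for all $F''\subseteq F'$; $\mathcal{B}$ is self-contained if $|F|=|V|$ and $F$ is self-contained; a non-empty self-contained set is minimal self-contained if no non-empty strict subset is self-contained. A matching is a set of edges without common endpoints; a maximum matching is one of maximal cardinality. For a matching $M$, an alternating path is a sequence of distinct vertices (possibly a single vertex) in which consecutive vertices are adjacent and the edges used alternate between edges not in $M$ and edges in $M$. A directed cluster graph is a pair $\langle\mathcal{V},\mathcal{E}\rangle$ with $\mathcal{V}$ a partition of a vertex set and $\mathcal{E}$ a set of edges $x\to C$ from vertices to clusters; $\mathrm{cl}_{\mathcal{V}}(x)$ is the cluster containing $x$. Algorithm 1 (input $W$ and $\mathcal{B}$ with the subgraph induced by $(V\setminus W)\cup F$ self-contained): initialize $\mathcal{E}=\emptyset$, $\mathcal{V}=\{\{w\}:w\in W\}$, $\mathcal{B}'=\langle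 V',F',E'\rangle$ the subgraph induced by $(V\setminus W)\cup F$; while $\mathcal{B}'$ is non-null: choose a minimal self-contained $S_F\subseteq F'$ in $\mathcal{B}'$, let $C=S_F\cup\mathrm{adj}_{\mathcal{B}'}(S_F)$, add $C$ to $\mathcal{V}$, add $v\to C$ for every $v\in\mathrm{adj}_{\mathcal{B}}(S_F)\setminus\mathrm{adj}_{\mathcal{B}'}(S_F)$, and replace $\mathcal{B}'$ by its subgraph induced by $(V'\cup F')\setminus C$. Output $\langle\mathcal{V},\mathcal{E}\rangle$. Coarse decomposition of a bipartite graph $\mathcal{B}'$ w.r.t. a maximum matching $M$: let $V_{\mathrm{un}},F_{\mathrm{un}}$ be the vertices of the variable side and of the constraint side left unmatched by $M$; $T_I$ is the set of vertices joined by an alternating path to some vertex of $V_{\mathrm{un}}$, $T_O$ the set of vertices joined by an alternating path to some vertex of $F_{\mathrm{un}}$, and $T_C$ the remaining vertices. Algorithm 3 (input $W\subseteq V$, $\mathcal{B}$): let $\mathcal{B}'$ be the subgraph of $\mathcal{B}$ induced by $(V\setminus W)\cup F$; choose a maximum matching $M$ of $\mathcal{B}'$; let $\langle T_I,T_C,T_O\rangle$ be the coarse decomposition of $\mathcal{B}'$ w.r.t. $M$ and $\mathcal{B}_I,\mathcal{B}_C,\mathcal{B}_O$ the subgraphs of $\mathcal{B}'$ induced by $T_I,T_C,T_O$. Let $\langle\mathcal{V}_C,\mathcal{E}_C\rangle$ be the output of Algorithm 1 on $\mathcal{B}_C$ with no exogenous vertices; $\mathcal{V}_I$, $\mathcal{V}_O$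 the partitions of $T_I$, $T_O$ into vertex sets of connected components of $\mathcal{B}_I$, $\mathcal{B}_O$. Set $\mathcal{V}=\mathcal{V}_I\cup\mathcal{V}_C\cup\mathcal{V}_O\cup\{\{w\}:w\in W\}$ and $\mathcal{E}=\mathcal{E}_C$; for each $(v-f)\in E$: if $v\in(T_O\cup T_C)\cap V$ and $f\in T_I\cap F$, add $v\to\mathrm{cl}_{\mathcal{V}}(f)$; else if $v\in T_O\cap V$ and $f\in T_C\cap F$, add $v\to\mathrm{cl}_{\mathcal{V}}(f)$. For each $w\in W$ add $w\to\mathrm{cl}_{\mathcal{V}}(f)$ for all $f\in\mathrm{adj}_{\mathcal{B}}(w)$. Output $\langle\mathcal{V},\mathcal{E}\rangle$. *)

theory Defs
  imports Main "HOL-Library.Disjoint_Sets"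
begin

text \<open>A bipartite graph is given by two disjoint vertex sets V (variables) and F
  (constraints) of a common type and an edge set E of pairs (v,f) with v in V, f in F.\<close>

definition bipartite :: "'a set \<Rightarrow> 'a set \<Rightarrow> ('a \<times> 'a) set \<Rightarrow> bool" where
  "bipartite V F E \<longleftrightarrow> V \<inter> F = {} \<and> E \<subseteq> V \<times> F"

definition adj :: "('a \<times> 'a) set \<Rightarrow> 'a set \<Rightarrow> 'a set" where
  "adj E X = {y. \<exists>x\<in>X. (x, y) \<in> E \<or> (y, x) \<in> E}"

definition self_contained_set :: "('a \<times> 'a) set \<Rightarrow> 'a set \<Rightarrow> bool" where
  "self_contained_set E Fs \<longleftrightarrow>
     card Fs = card (adj E Fs) \<and> (\<forall>G\<subseteq>Fs. card G \<le> card (adj E G))"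

definition self_contained_graph :: "'a set \<Rightarrow> 'a set \<Rightarrow> ('a \<times> 'a) set \<Rightarrow> bool" where
  "self_contained_graph V F E \<longleftrightarrow> card F = card V \<and> self_contained_set E F"

definition min_self_contained :: "'a set \<Rightarrow> ('a \<times> 'a) set \<Rightarrow> 'a set \<Rightarrow> bool" where
  "min_self_contained F E S \<longleftrightarrow> S \<noteq> {} \<and> S \<subseteq> F \<and> self_contained_set E S \<and>
     (\<forall>S'. S' \<subset> S \<and> S' \<noteq> {} \<longrightarrow> \<not> self_contained_set E S')"

section \<open>Algorithm 1 (nondeterministic), as a transition system\<close>

text \<open>State: (remaining vertex set R of B' (B' is the subgraph of B induced by R),
  clusters so far, cluster edges so far). Cluster edges x \<rightarrow> C are pairs (x, C).\<close>

type_synonym 'a alg1_state = "'a set \<times> 'a set set \<times> ('a \<times> 'a set) set"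

definition alg1_init :: "'a set \<Rightarrow> 'a set \<Rightarrow> 'a set \<Rightarrow> 'a alg1_state" where
  "alg1_init V F W = ((V - W) \<union> F, (\<lambda>w. {w}) ` W, {})"

inductive alg1_step :: "'a set \<Rightarrow> ('a \<times> 'a) set \<Rightarrow> 'a alg1_state \<Rightarrow> 'a alg1_state \<Rightarrow> bool"
  for F E where
  "\<lbrakk> R \<noteq> {};
     min_self_contained (F \<inter> R) (E \<inter> (R \<times> R)) S;
     C = S \<union> adj (E \<inter> (R \<times> R)) S \<rbrakk> \<Longrightarrow>
   alg1_step F E (R, Vc, Ec)
     (R - C, insert C Vc, Ec \<union> {(v, C) | v. v \<in> adj E S - adj (E \<inter> (R \<times> R)) S})"

definition alg1_reachable ::
  "'a set \<Rightarrow> 'a set \<Rightarrow> ('a \<times> 'a) set \<Rightarrow> 'a set \<Rightarrow> 'a alg1_state \<Rightarrow> bool" where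
  "alg1_reachable V F E W st \<longleftrightarrow> (alg1_step F E)\<^sup>*\<^sup>* (alg1_init V F W) st"

definition alg1_output ::
  "'a set \<Rightarrow> 'a set \<Rightarrow> ('a \<times> 'a) set \<Rightarrow> 'a set \<Rightarrow> 'a set set \<times> ('a \<times> 'a set) set \<Rightarrow> bool" where
  "alg1_output V F E W out \<longleftrightarrow> (\<exists>Vc Ec. alg1_reachable V F E W ({}, Vc, Ec) \<and> out = (Vc, Ec))"

text \<open>Algorithm 1 is well-defined on (W, B): its input condition holds and in every reachable
  state with B' non-null a minimal self-contained set can be chosen (termination is automatic,
  since each step removes a non-empty set of vertices from a finite set).\<close>
definition alg1_well_defined :: "'a set \<Rightarrow> 'a set \<Rightarrow> ('a \<times> 'a) set \<Rightarrow> 'a set \<Rightarrow> bool" where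
  "alg1_well_defined V F E W \<longleftrightarrow>
     self_contained_graph (V - W) F (E \<inter> (((V - W) \<union> F) \<times> ((V - W) \<union> F))) \<and>
     (\<forall>R Vc Ec. alg1_reachable V F E W (R, Vc, Ec) \<and> R \<noteq> {} \<longrightarrow>
        (\<exists>st'. alg1_step F E (R, Vc, Ec) st'))"

definition matching :: "('a \<times> 'a) set \<Rightarrow> bool" where
  "matching M \<longleftrightarrow> (\<forall>e1\<in>M. \<forall>e2\<in>M. e1 \<noteq> e2 \<longrightarrow>
     {fst e1, snd e1} \<inter> {fst e2, snd e2} = {})"

definition max_matching :: "('a \<times> 'a) set \<Rightarrow> ('a \<times> 'a) set \<Rightarrow> bool" where
  "max_matching E M \<longleftrightarrow> M \<subseteq> E \<and> matching M \<and>
     (\<forall>M'. M' \<subseteq> E \<and> matching M' \<longrightarrow> card M' \<le> card M)"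

definition alternating_path :: "('a \<times> 'a) set \<Rightarrow> ('a \<times> 'a) set \<Rightarrow> 'a list \<Rightarrow> bool" where
  "alternating_path E M p \<longleftrightarrow> p \<noteq> [] \<and> distinct p \<and>
     (\<forall>i. Suc i < length p \<longrightarrow>
        ((p ! i, p ! Suc i) \<in> E \<or> (p ! Suc i, p ! i) \<in> E) \<and>
        (((p ! i, p ! Suc i) \<in> M \<or> (p ! Suc i, p ! i) \<in> M) \<longleftrightarrow> odd i))"

definition unmatched :: "'a set \<Rightarrow> ('a \<times> 'a) set \<Rightarrow> 'a set" where
  "unmatched S M = {x\<in>S. \<forall>y. (x, y) \<notin> M \<and> (y, x) \<notin> M}"

definition alt_reach :: "('a \<times> 'a) set \<Rightarrow> ('a \<times> 'a) set \<Rightarrow> 'a set \<Rightarrow> 'a set" where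
  "alt_reach E M U = {x. \<exists>p. alternating_path E M p \<and> hd p \<in> U \<and> last p = x}"

definition coarse_I :: "'a set \<Rightarrow> ('a \<times> 'a) set \<Rightarrow> ('a \<times> 'a) set \<Rightarrow> 'a set" where
  "coarse_I Vb Eb M = alt_reach Eb M (unmatched Vb M)"

definition coarse_O :: "'a set \<Rightarrow> ('a \<times> 'a) set \<Rightarrow> ('a \<times> 'a) set \<Rightarrow> 'a set" where
  "coarse_O Fb Eb M = alt_reach Eb M (unmatched Fb M)"

definition coarse_C :: "'a set \<Rightarrow> 'a set \<Rightarrow> ('a \<times> 'a) set \<Rightarrow> ('a \<times> 'a) set \<Rightarrow> 'a set" where
  "coarse_C Vb Fb Eb M = (Vb \<union> Fb) - coarse_I Vb Eb M - coarse_O Fb Eb M"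

definition components :: "'a set \<Rightarrow> ('a \<times> 'a) set \<Rightarrow> 'a set set" where
  "components S E = {{y\<in>S. (x, y) \<in> ((E \<union> E\<inverse>) \<inter> (S \<times> S))\<^sup>*} | x. x \<in> S}"

definition cl :: "'a set set \<Rightarrow> 'a \<Rightarrow> 'a set" where
  "cl Vs x = (THE C. C \<in> Vs \<and> x \<in> C)"

text \<open>B' has vertex sets V - W and F and edge set alg3_E' V F E W.\<close>
definition alg3_E' :: "'a set \<Rightarrow> 'a set \<Rightarrow> ('a \<times> 'a) set \<Rightarrow> 'a set \<Rightarrow> ('a \<times> 'a) set" where
  "alg3_E' V F E W = E \<inter> (((V - W) \<union> F) \<times> ((V - W) \<union> F))"

definition alg3_TI where "alg3_TI V F E W M = coarse_I (V - W) (alg3_E' V F E W) M"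
definition alg3_TO where "alg3_TO V F E W M = coarse_O F (alg3_E' V F E W) M"
definition alg3_TC where "alg3_TC V F E W M = coarse_C (V - W) F (alg3_E' V F E W) M"

definition alg3_output_for ::
  "'a set \<Rightarrow> 'a set \<Rightarrow> ('a \<times> 'a) set \<Rightarrow> 'a set \<Rightarrow> ('a \<times> 'a) set \<Rightarrow>
   'a set set \<times> ('a \<times> 'a set) set \<Rightarrow> bool" where
  "alg3_output_for V F E W M out \<longleftrightarrow>
    (let TI = alg3_TI V F E W M; TO = alg3_TO V F E W M; TC = alg3_TC V F E W M in
     \<exists>VC EC. alg1_output (V \<inter> TC) (F \<inter> TC) (E \<inter> (TC \<times> TC)) {} (VC, EC) \<and>
       (let Vs = components TI (E \<inter> (TI \<times> TI)) \<union> VC \<union> components TO (E \<inter> (TO \<times> TO))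
                 \<union> (\<lambda>w. {w}) ` W
        in out = (Vs,
             EC
             \<union> {(v, cl Vs f) | v f. (v, f) \<in> E \<and> v \<in> (TO \<union> TC) \<inter> V \<and> f \<in> TI \<inter> F}
             \<union> {(v, cl Vs f) | v f. (v, f) \<in> E \<and> \<not> (v \<in> (TO \<union> TC) \<inter> V \<and> f \<in> TI \<inter> F)
                                   \<and> v \<in> TO \<inter> V \<and> f \<in> TC \<inter> F}
             \<union> {(w, cl Vs f) | w f. w \<in> W \<and> f \<in> adj E {w}})))"

definition alg3_output ::
  "'a set \<Rightarrow> 'a set \<Rightarrow> ('a \<times> 'a) set \<Rightarrow> 'a set \<Rightarrow> 'a set set \<times> ('a \<times> 'a set) set \<Rightarrow> bool" where
  "alg3_output V F E W out \<longleftrightarrow>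
     (\<exists>M. max_matching (alg3_E' V F E W) M \<and> alg3_output_for V F E W M out)"

text \<open>Well-definedness of Algorithm 3: a maximum matching exists; for every maximum matching,
  Algorithm 1 is well-defined on the complete part B_C (with no exogenous vertices); and the
  resulting cluster set partitions V \<union> F, so that cl is well-defined.\<close>
definition alg3_well_defined :: "'a set \<Rightarrow> 'a set \<Rightarrow> ('a \<times> 'a) set \<Rightarrow> 'a set \<Rightarrow> bool" where
  "alg3_well_defined V F E W \<longleftrightarrow>
     (\<exists>M. max_matching (alg3_E' V F E W) M) \<and>
     (\<forall>M. max_matching (alg3_E' V F E W) M \<longrightarrow>
        (let TC = alg3_TC V F E W M in
          alg1_well_defined (V \<inter> TC) (F \<inter> TC) (E \<inter> (TC \<times> TC)) {}) \<and>
        (\<forall>out. alg3_output_for V F E W M out \<longrightarrow> partition_on (V \<union> F) (fst out)))"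

end

theory Submission
  imports Defs "HOL-Library.Confluence"
begin

text \<open>Two facts make Algorithm 3 deterministic.

  First, the coarse decomposition does not depend on the maximum matching M. If \<delta> is the number
  of vertices of V left unmatched by M, then |X| \<le> |adj X| + \<delta> for every X \<subseteq> V, and V \<inter> T_I is
  the least set attaining equality, with adj (V \<inter> T_I) = F \<inter> T_I (the augmenting-path argument
  shows that every vertex of F \<inter> T_I is matched). Comparing two maximum matchings through these
  inequalities shows that \<delta> and T_I are determined by the graph; T_O is T_I of the converse graph.
  The same minimality gives T_I \<inter> T_O = {}, and M matches T_C perfectly onto itself, so the complete
  part is self-contained (Hall).

  Second, on a self-contained graph the steps of Algorithm 1 commute: two distinct minimal
  self-contained sets are disjoint, have disjoint neighbourhoods, and each stays minimal once the
  cluster of the other has been removed. Algorithm 1 is therefore a terminating, strongly confluent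
  rewrite system and reaches a unique final state.\<close>

section \<open>Matchings and alternating paths\<close>

definition adjacent :: "('a \<times> 'a) set \<Rightarrow> 'a \<Rightarrow> 'a \<Rightarrow> bool" where
  "adjacent E x y \<longleftrightarrow> (x, y) \<in> E \<or> (y, x) \<in> E"

lemma adjacent_converse [simp]: "adjacent (E\<inverse>) x y = adjacent E x y"
  by (auto simp: adjacent_def)

lemma alternating_path_iff:
  "alternating_path E M p \<longleftrightarrow> p \<noteq> [] \<and> distinct p \<and>
     (\<forall>i. Suc i < length p \<longrightarrow>
        adjacent E (p ! i) (p ! Suc i) \<and> (adjacent M (p ! i) (p ! Suc i) \<longleftrightarrow> odd i))"
  unfolding alternating_path_def adjacent_def ..

lemma alternating_pathD:
  assumes "alternating_path E M p" "Suc i < length p"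
  shows "adjacent E (p ! i) (p ! Suc i)" "adjacent M (p ! i) (p ! Suc i) \<longleftrightarrow> odd i"
  using assms by (auto simp: alternating_path_iff)

lemma alternating_path_converse [simp]:
  "alternating_path (E\<inverse>) (M\<inverse>) p = alternating_path E M p"
  by (simp add: alternating_path_iff)

lemma unmatched_converse [simp]: "unmatched S (M\<inverse>) = unmatched S M"
  by (auto simp: unmatched_def)

lemma alt_reach_converse [simp]: "alt_reach (E\<inverse>) (M\<inverse>) U = alt_reach E M U"
  by (simp add: alt_reach_def)

lemma adj_converse [simp]: "adj (E\<inverse>) X = adj E X"
  by (auto simp: adj_def)

lemma adj_Un: "adj E (X \<union> Y) = adj E X \<union> adj E Y"
  by (auto simp: adj_def)

lemma adj_mono: "X \<subseteq> Y \<Longrightarrow> adj E X \<subseteq> adj E Y"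
  by (auto simp: adj_def)

lemma adj_mono_edges: "E1 \<subseteq> E2 \<Longrightarrow> adj E1 X \<subseteq> adj E2 X"
  by (auto simp: adj_def)

lemma matching_converse_imp: "matching M \<Longrightarrow> matching (M\<inverse>)"
  unfolding matching_def
proof (intro ballI impI)
  fix e1 e2 assume H: "\<forall>e1\<in>M. \<forall>e2\<in>M. e1 \<noteq> e2 \<longrightarrow> {fst e1, snd e1} \<inter> {fst e2, snd e2} = {}"
    and e: "e1 \<in> M\<inverse>" "e2 \<in> M\<inverse>" "e1 \<noteq> e2"
  obtain a b c d where abcd: "e1 = (a, b)" "e2 = (c, d)" by (cases e1, cases e2) auto
  have "(b, a) \<in> M" "(d, c) \<in> M" "(b, a) \<noteq> (d, c)" using e abcd by auto
  then have "{b, a} \<inter> {d, c} = {}" using H by fastforce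
  then show "{fst e1, snd e1} \<inter> {fst e2, snd e2} = {}" using abcd by auto
qed

lemma matching_converse [simp]: "matching (M\<inverse>) = matching M"
  using matching_converse_imp[of M] matching_converse_imp[of "M\<inverse>"] by auto

lemma matching_subset: "N \<subseteq> M \<Longrightarrow> matching M \<Longrightarrow> matching N"
  unfolding matching_def by blast

lemma max_matching_converse [simp]: "max_matching (E\<inverse>) (M\<inverse>) = max_matching E M"
  unfolding max_matching_def
  by (metis card_inverse converse_converse converse_subset_swap matching_converse)

lemma matching_unique_snd:
  assumes "matching M" "(a, b) \<in> M" "(a, b') \<in> M"
  shows "b = b'"
proof (rule ccontr)
  assume "b \<noteq> b'"
  then have "{fst (a, b), snd (a, b)} \<inter> {fst (a, b'), snd (a, b')} = {}"
    using assms unfolding matching_def by blast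
  then show False by simp
qed

lemma matching_unique_fst:
  assumes "matching M" "(a, b) \<in> M" "(a', b) \<in> M"
  shows "a = a'"
proof (rule ccontr)
  assume "a \<noteq> a'"
  then have "{fst (a, b), snd (a, b)} \<inter> {fst (a', b), snd (a', b)} = {}"
    using assms unfolding matching_def by blast
  then show False by simp
qed

lemma max_matching_exists:
  assumes "finite E"
  shows "\<exists>M. max_matching E M"
proof -
  have "\<exists>M. (M \<subseteq> E \<and> matching M) \<and>
      (\<forall>M'. M' \<subseteq> E \<and> matching M' \<longrightarrow> card M' \<le> card M)"
  proof (rule ex_has_greatest_nat)
    show "{} \<subseteq> E \<and> matching {}" by (simp add: matching_def)
    show "\<forall>M. M \<subseteq> E \<and> matching M \<longrightarrow> card M < Suc (card E)"
      using assms by (simp add: card_mono less_Suc_eq_le)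
  qed
  then show ?thesis unfolding max_matching_def by blast
qed

lemma alternating_path_singleton: "alternating_path E M [x]"
  by (simp add: alternating_path_iff)

lemma alternating_path_take:
  "alternating_path E M p \<Longrightarrow> 0 < k \<Longrightarrow> alternating_path E M (take k p)"
  by (auto simp: alternating_path_iff)

lemma alternating_path_snoc:
  assumes "alternating_path E M p" "x \<notin> set p" "adjacent E (last p) x"
    "adjacent M (last p) x \<longleftrightarrow> odd (length p - 1)"
  shows "alternating_path E M (p @ [x])"
proof -
  have p: "p \<noteq> []" "distinct p" using assms(1) by (auto simp: alternating_path_iff)
  have "adjacent E ((p @ [x]) ! i) ((p @ [x]) ! Suc i) \<and>
      (adjacent M ((p @ [x]) ! i) ((p @ [x]) ! Suc i) \<longleftrightarrow> odd i)"
    if "Suc i < length (p @ [x])" for i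
  proof (cases "Suc i < length p")
    case True
    then show ?thesis using assms(1) by (simp add: nth_append alternating_path_iff)
  next
    case False
    then have "i = length p - 1" "Suc i = length p" using that by auto
    then show ?thesis using assms(3,4) p by (simp add: nth_append last_conv_nth)
  qed
  then show ?thesis using p assms(2) by (simp add: alternating_path_iff)
qed

lemma alt_reach_nth:
  assumes "alternating_path E M p" "hd p \<in> U" "j < length p"
  shows "p ! j \<in> alt_reach E M U"
  unfolding alt_reach_def mem_Collect_eq
proof (intro exI conjI)
  show "alternating_path E M (take (Suc j) p)" using alternating_path_take[OF assms(1)] by simp
  show "hd (take (Suc j) p) \<in> U" using assms(2) by simp
  show "last (take (Suc j) p) = p ! j" using assms(3) by (simp add: take_Suc_conv_app_nth)
qed

lemma alt_reach_snoc:
  assumes "alternating_path E M p" "hd p \<in> U" "x \<notin> set p" "adjacent E (last p) x"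
    "adjacent M (last p) x \<longleftrightarrow> odd (length p - 1)"
  shows "x \<in> alt_reach E M U"
  unfolding alt_reach_def mem_Collect_eq
proof (intro exI conjI)
  show "alternating_path E M (p @ [x])" using alternating_path_snoc[OF assms(1,3-5)] .
  show "hd (p @ [x]) \<in> U" using assms(1,2) by (simp add: alternating_path_iff)
qed simp

lemma unmatched_subset: "unmatched S M \<subseteq> S"
  by (auto simp: unmatched_def)

lemma unmatched_subset_alt_reach: "unmatched S M \<subseteq> alt_reach E M (unmatched S M)"
  using alt_reach_nth[OF alternating_path_singleton, of _ "unmatched S M" 0 E M] by auto

section \<open>Bipartite graphs\<close>

locale bipartite_graph =
  fixes V F :: "'a set" and E :: "('a \<times> 'a) set"
  assumes finite_V: "finite V" and finite_F: "finite F"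
    and sides_disjoint: "V \<inter> F = {}" and edges_between: "E \<subseteq> V \<times> F"
begin

lemma converse_graph: "bipartite_graph F V (E\<inverse>)"
  using finite_V finite_F sides_disjoint edges_between by unfold_locales auto

lemma finite_E: "finite E"
  using finite_subset[OF edges_between] finite_V finite_F by blast

lemma adjacent_from_V:
  "N \<subseteq> E \<Longrightarrow> adjacent N x y \<Longrightarrow> x \<in> V \<Longrightarrow> (x, y) \<in> N \<and> y \<in> F"
  using edges_between sides_disjoint by (auto simp: adjacent_def)

lemma adjacent_from_F:
  "N \<subseteq> E \<Longrightarrow> adjacent N x y \<Longrightarrow> x \<in> F \<Longrightarrow> (y, x) \<in> N \<and> y \<in> V"
  using edges_between sides_disjoint by (auto simp: adjacent_def)

lemma adj_V_subset: "adj E X \<subseteq> V"  if "X \<subseteq> F"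
  using that edges_between sides_disjoint by (auto simp: adj_def)

lemma adj_F_subset: "adj E X \<subseteq> F"  if "X \<subseteq> V"
  using that edges_between sides_disjoint by (auto simp: adj_def)

lemma alternating_path_sides:
  assumes "alternating_path E M p" "hd p \<in> V" "k < length p"
  shows "p ! k \<in> (if even k then V else F)"
  using assms(3)
proof (induction k)
  case 0
  then show ?case using assms(1,2) by (simp add: alternating_path_iff hd_conv_nth)
next
  case (Suc k)
  have edge: "adjacent E (p ! k) (p ! Suc k)" using assms(1) Suc(2) by (simp add: alternating_path_iff)
  have "p ! k \<in> (if even k then V else F)" using Suc by simp
  then show ?case
    using adjacent_from_V[OF subset_refl edge] adjacent_from_F[OF subset_refl edge]
    by (cases "even k") auto
qed

lemma alternating_path_last:
  assumes "alternating_path E M p" "hd p \<in> V"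
  shows "last p \<in> (if even (length p - 1) then V else F)"
  using alternating_path_sides[OF assms, of "length p - 1"] assms(1)
  by (simp add: alternating_path_iff last_conv_nth)

lemma matchingI_unique_mates:
  assumes "N \<subseteq> E"
    and "\<And>a b b'. (a, b) \<in> N \<Longrightarrow> (a, b') \<in> N \<Longrightarrow> b = b'"
    and "\<And>a a' b. (a, b) \<in> N \<Longrightarrow> (a', b) \<in> N \<Longrightarrow> a = a'"
  shows "matching N"
  unfolding matching_def
proof (intro ballI impI)
  fix e1 e2 assume e: "e1 \<in> N" "e2 \<in> N" "e1 \<noteq> e2"
  obtain a b c d where abcd: "e1 = (a, b)" "e2 = (c, d)" by (cases e1, cases e2) auto
  have "a \<in> V" "b \<in> F" "c \<in> V" "d \<in> F" using e abcd assms(1) edges_between by auto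
  moreover have "a \<noteq> c" "b \<noteq> d" using assms(2,3) e abcd by auto
  ultimately show "{fst e1, snd e1} \<inter> {fst e2, snd e2} = {}"
    using abcd sides_disjoint by auto
qed

end

locale bipartite_matching = bipartite_graph +
  fixes M :: "('a \<times> 'a) set"
  assumes matching_subset_edges: "M \<subseteq> E" and matching_M: "matching M"
begin

abbreviation TI :: "'a set" where "TI \<equiv> alt_reach E M (unmatched V M)"
abbreviation TO :: "'a set" where "TO \<equiv> alt_reach E M (unmatched F M)"

lemma converse_matching: "bipartite_matching F V (E\<inverse>) (M\<inverse>)"
  using converse_graph matching_subset_edges matching_M
  by (auto simp: bipartite_matching_def bipartite_matching_axioms_def)

lemma finite_M: "finite M"
  using finite_subset[OF matching_subset_edges finite_E] .

lemma mate_unique_F: "(a, b) \<in> M \<Longrightarrow> (a, b') \<in> M \<Longrightarrow> b = b'"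
  using matching_unique_snd[OF matching_M] .

lemma mate_unique_V: "(a, b) \<in> M \<Longrightarrow> (a', b) \<in> M \<Longrightarrow> a = a'"
  using matching_unique_fst[OF matching_M] .

lemma TI_subset: "TI \<subseteq> V \<union> F"
proof
  fix x assume "x \<in> TI"
  then obtain p where "alternating_path E M p" "hd p \<in> unmatched V M" "last p = x"
    unfolding alt_reach_def by blast
  then show "x \<in> V \<union> F"
    using alternating_path_last[of M p] unmatched_subset[of V M] by (auto split: if_splits)
qed

lemma mate_of_V_end_on_path:
  assumes p: "alternating_path E M p" "hd p \<in> unmatched V M" "last p \<in> V"
    and b: "(last p, b) \<in> M"
  shows "b \<in> set p"
proof -
  have hd: "hd p \<in> V" using p(2) by (simp add: unmatched_def)
  have "p \<noteq> []" using p(1) by (simp add: alternating_path_iff)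
  have "even (length p - 1)"
    using alternating_path_last[OF p(1) hd] p(3) sides_disjoint by (auto split: if_splits)
  have "length p \<noteq> 1"
  proof
    assume "length p = 1"
    then have "hd p = last p" using \<open>p \<noteq> []\<close> by (simp add: hd_conv_nth last_conv_nth)
    then show False using p(2) b by (auto simp: unmatched_def)
  qed
  define k where "k = length p - 2"
  have k: "Suc k = length p - 1" "odd k" "Suc k < length p"
    using \<open>length p \<noteq> 1\<close> \<open>p \<noteq> []\<close> \<open>even (length p - 1)\<close> unfolding k_def
    by (simp_all add: odd_iff_mod_2_eq_one)
  have "adjacent M (p ! k) (p ! Suc k)" using alternating_pathD(2)[OF p(1) k(3)] k(2) by simp
  moreover have "p ! k \<in> F" using alternating_path_sides[OF p(1) hd, of k] k by simp
  ultimately have "(p ! Suc k, p ! k) \<in> M" using adjacent_from_F[OF matching_subset_edges] by blast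
  moreover have "p ! Suc k = last p" using k \<open>p \<noteq> []\<close> by (simp add: last_conv_nth)
  ultimately have "b = p ! k" using mate_unique_F[OF b] by simp
  then show ?thesis using k by simp
qed

lemma TI_edge_closed:
  assumes "a \<in> TI" "a \<in> V" "(a, b) \<in> E"
  shows "b \<in> TI"
proof -
  obtain p where p: "alternating_path E M p" "hd p \<in> unmatched V M" "last p = a"
    using assms(1) unfolding alt_reach_def by blast
  have "hd p \<in> V" using p(2) by (simp add: unmatched_def)
  then have "even (length p - 1)"
    using alternating_path_last[OF p(1)] p(3) assms(2) sides_disjoint by (auto split: if_splits)
  show ?thesis
  proof (cases "b \<in> set p")
    case True
    then show ?thesis using alt_reach_nth[OF p(1,2)] by (auto simp: in_set_conv_nth)
  next
    case False
    then have "\<not> adjacent M a b"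
      using mate_of_V_end_on_path[OF p(1,2)] adjacent_from_V[OF matching_subset_edges] assms(2) p(3)
      by blast
    then show ?thesis
      using alt_reach_snoc[OF p(1,2) False] assms(3) p(3) \<open>even (length p - 1)\<close>
      by (simp add: adjacent_def)
  qed
qed

lemma TI_mate_closed:
  assumes "b \<in> TI" "b \<in> F" "(a, b) \<in> M"
  shows "a \<in> TI"
proof -
  obtain p where p: "alternating_path E M p" "hd p \<in> unmatched V M" "last p = b"
    using assms(1) unfolding alt_reach_def by blast
  have "hd p \<in> V" using p(2) by (simp add: unmatched_def)
  then have "odd (length p - 1)"
    using alternating_path_last[OF p(1)] p(3) assms(2) sides_disjoint by (auto split: if_splits)
  show ?thesis
  proof (cases "a \<in> set p")
    case True
    then show ?thesis using alt_reach_nth[OF p(1,2)] by (auto simp: in_set_conv_nth)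
  next
    case False
    then show ?thesis
      using alt_reach_snoc[OF p(1,2) False] assms(3) matching_subset_edges p(3)
        \<open>odd (length p - 1)\<close> by (auto simp: adjacent_def)
  qed
qed

lemma TI_F_has_neighbour:
  assumes "b \<in> TI" "b \<in> F"
  obtains a where "a \<in> TI" "a \<in> V" "(a, b) \<in> E"
proof -
  obtain p where p: "alternating_path E M p" "hd p \<in> unmatched V M" "last p = b"
    using assms(1) unfolding alt_reach_def by blast
  have hd: "hd p \<in> V" using p(2) by (simp add: unmatched_def)
  then have "odd (length p - 1)"
    using alternating_path_last[OF p(1)] p(3) assms(2) sides_disjoint by (auto split: if_splits)
  define k where "k = length p - 2"
  have k: "Suc k = length p - 1" "even k" "Suc k < length p"
    using \<open>odd (length p - 1)\<close> unfolding k_def by presburger+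
  have "p ! k \<in> V" using alternating_path_sides[OF p(1) hd, of k] k by simp
  moreover have "p ! k \<in> TI" using alt_reach_nth[OF p(1,2), of k] k by simp
  moreover have "adjacent E (p ! k) (p ! Suc k)" using alternating_pathD(1)[OF p(1) k(3)] .
  moreover have "p ! Suc k = b" using k p(1,3) by (simp add: alternating_path_iff last_conv_nth)
  ultimately show ?thesis using that adjacent_from_V[OF subset_refl] by blast
qed

end

section \<open>Augmenting paths\<close>

locale augmenting_path = bipartite_matching +
  fixes p :: "'a list"
  assumes path: "alternating_path E M p"
    and starts_unmatched: "hd p \<in> unmatched V M" and ends_unmatched: "last p \<in> unmatched F M"
begin

definition half_length :: nat where
  "half_length = length p div 2"

lemma path_nonempty: "p \<noteq> []"
  using path by (simp add: alternating_path_iff)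

lemma hd_in_V: "hd p \<in> V"
  using starts_unmatched by (simp add: unmatched_def)

lemma length_eq: "length p = 2 * half_length" "0 < half_length"
proof -
  have "odd (length p - 1)"
    using alternating_path_last[OF path hd_in_V] ends_unmatched sides_disjoint
    by (auto simp: unmatched_def split: if_splits)
  then show "length p = 2 * half_length" "0 < half_length"
    using path_nonempty unfolding half_length_def by presburger+
qed

lemma nth_eq_iff: "i < length p \<Longrightarrow> j < length p \<Longrightarrow> p ! i = p ! j \<longleftrightarrow> i = j"
  using nth_eq_iff_index_eq path by (auto simp: alternating_path_iff)

definition path_edge :: "nat \<Rightarrow> 'a \<times> 'a" where
  "path_edge i = (if even i then (p ! i, p ! Suc i) else (p ! Suc i, p ! i))"

lemma path_edge: "Suc i < length p \<Longrightarrow> path_edge i \<in> E \<and> (path_edge i \<in> M \<longleftrightarrow> odd i)"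
proof -
  assume i: "Suc i < length p"
  have side: "p ! i \<in> (if even i then V else F)"
    using alternating_path_sides[OF path hd_in_V, of i] i by simp
  note edge = alternating_pathD[OF path i]
  show ?thesis
  proof (cases "even i")
    case True
    then show ?thesis
      using side edge adjacent_from_V[OF subset_refl, of "p ! i" "p ! Suc i"]
        adjacent_from_V[OF matching_subset_edges, of "p ! i" "p ! Suc i"]
      by (auto simp: path_edge_def adjacent_def)
  next
    case False
    then show ?thesis
      using side edge adjacent_from_F[OF subset_refl, of "p ! i" "p ! Suc i"]
        adjacent_from_F[OF matching_subset_edges, of "p ! i" "p ! Suc i"]
      by (auto simp: path_edge_def adjacent_def)
  qed
qed

definition entering :: "('a \<times> 'a) set" where
  "entering = (\<lambda>j. path_edge (2 * j)) ` {..<half_length}"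

definition leaving :: "('a \<times> 'a) set" where
  "leaving = (\<lambda>j. path_edge (2 * j + 1)) ` {..<half_length - 1}"

definition augmented :: "('a \<times> 'a) set" where
  "augmented = (M - leaving) \<union> entering"

lemma entering_subset: "entering \<subseteq> E" "entering \<inter> M = {}"
proof -
  have "path_edge (2 * j) \<in> E \<and> path_edge (2 * j) \<notin> M" if "j < half_length" for j
    using path_edge[of "2 * j"] that length_eq by simp
  then show "entering \<subseteq> E" "entering \<inter> M = {}" unfolding entering_def by auto
qed

lemma leaving_subset: "leaving \<subseteq> M"
proof -
  have "path_edge (2 * j + 1) \<in> M" if "j < half_length - 1" for j
    using path_edge[of "2 * j + 1"] that length_eq by simp
  then show ?thesis unfolding leaving_def by auto
qed

lemma entering_elem:
  "x \<in> entering \<Longrightarrow> \<exists>j<half_length. x = (p ! (2 * j), p ! (2 * j + 1))"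
  unfolding entering_def path_edge_def by auto

lemma card_entering: "card entering = half_length"
proof -
  have "inj_on (\<lambda>j. path_edge (2 * j)) {..<half_length}"
  proof (rule inj_onI)
    fix i j assume "i \<in> {..<half_length}" "j \<in> {..<half_length}" "path_edge (2 * i) = path_edge (2 * j)"
    then show "i = j" using nth_eq_iff[of "2 * i" "2 * j"] length_eq by (auto simp: path_edge_def)
  qed
  then show ?thesis unfolding entering_def by (simp add: card_image)
qed

lemma card_leaving: "card leaving = half_length - 1"
proof -
  have "inj_on (\<lambda>j. path_edge (2 * j + 1)) {..<half_length - 1}"
  proof (rule inj_onI)
    fix i j assume "i \<in> {..<half_length - 1}" "j \<in> {..<half_length - 1}"
      "path_edge (2 * i + 1) = path_edge (2 * j + 1)"
    then show "i = j" using nth_eq_iff[of "2 * i + 1" "2 * j + 1"] length_eq by (auto simp: path_edge_def)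
  qed
  then show ?thesis unfolding leaving_def by (simp add: card_image)
qed

lemma matched_at_V_vertex:
  assumes "(x, y) \<in> M" "x = p ! (2 * j)" "j < half_length"
  shows "(x, y) \<in> leaving"
proof (cases j)
  case 0
  then show ?thesis using assms starts_unmatched path_nonempty by (auto simp: unmatched_def hd_conv_nth)
next
  case (Suc i)
  then have "path_edge (2 * i + 1) \<in> M" "path_edge (2 * i + 1) = (x, p ! (2 * i + 1))"
    using path_edge[of "2 * i + 1"] assms length_eq by (auto simp: path_edge_def)
  then have "(x, y) = path_edge (2 * i + 1)" using mate_unique_F assms(1) by auto
  then show ?thesis using Suc assms(3) unfolding leaving_def by auto
qed

lemma matched_at_F_vertex:
  assumes "(x, y) \<in> M" "y = p ! (2 * j + 1)" "j < half_length"
  shows "(x, y) \<in> leaving"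
proof (cases "j = half_length - 1")
  case True
  then have "2 * j + 1 = length p - 1" using length_eq by simp
  then have "y = last p" using assms(2) path_nonempty by (simp add: last_conv_nth)
  then show ?thesis using assms(1) ends_unmatched by (auto simp: unmatched_def)
next
  case False
  then have "path_edge (2 * j + 1) \<in> M" "path_edge (2 * j + 1) = (p ! (2 * j + 2), y)"
    using path_edge[of "2 * j + 1"] assms length_eq by (auto simp: path_edge_def)
  then have "(x, y) = path_edge (2 * j + 1)" using mate_unique_V assms(1) by auto
  then show ?thesis using False assms(3) unfolding leaving_def by auto
qed

lemma augmented_subset: "augmented \<subseteq> E"
  using entering_subset matching_subset_edges unfolding augmented_def by blast

lemma entering_unique_fst:
  assumes x: "x \<in> entering" and y: "y \<in> augmented" and eq: "fst x = fst y"
  shows "x = y"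
proof -
  obtain j where j: "j < half_length" "x = (p ! (2 * j), p ! (2 * j + 1))"
    using entering_elem[OF x] by blast
  show ?thesis
  proof (cases "y \<in> entering")
    case True
    then obtain i where i: "i < half_length" "y = (p ! (2 * i), p ! (2 * i + 1))"
      using entering_elem by blast
    have "p ! (2 * i) = p ! (2 * j)" using eq i(2) j(2) by simp
    then have "i = j" using nth_eq_iff[of "2 * i" "2 * j"] i(1) j(1) length_eq(1) by simp
    then show ?thesis using i j by simp
  next
    case False
    then have "y \<in> M" "y \<notin> leaving" using y unfolding augmented_def by auto
    moreover have "y = (p ! (2 * j), snd y)" using eq j(2) by (cases y) simp
    ultimately show ?thesis using matched_at_V_vertex[of "p ! (2 * j)" "snd y" j] j(1) by simp
  qed
qed

lemma entering_unique_snd: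
  assumes x: "x \<in> entering" and y: "y \<in> augmented" and eq: "snd x = snd y"
  shows "x = y"
proof -
  obtain j where j: "j < half_length" "x = (p ! (2 * j), p ! (2 * j + 1))"
    using entering_elem[OF x] by blast
  show ?thesis
  proof (cases "y \<in> entering")
    case True
    then obtain i where i: "i < half_length" "y = (p ! (2 * i), p ! (2 * i + 1))"
      using entering_elem by blast
    have "p ! (2 * i + 1) = p ! (2 * j + 1)" using eq i(2) j(2) by simp
    then have "i = j" using nth_eq_iff[of "2 * i + 1" "2 * j + 1"] i(1) j(1) length_eq(1) by simp
    then show ?thesis using i j by simp
  next
    case False
    then have "y \<in> M" "y \<notin> leaving" using y unfolding augmented_def by auto
    moreover have "y = (fst y, p ! (2 * j + 1))" using eq j(2) by (cases y) simp
    ultimately show ?thesis using matched_at_F_vertex[of "fst y" "p ! (2 * j + 1)" j] j(1) by simp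
  qed
qed

lemma matching_augmented: "matching augmented"
proof (rule matchingI_unique_mates[OF augmented_subset])
  show "b = b'" if "(a, b) \<in> augmented" "(a, b') \<in> augmented" for a b b'
    using that entering_unique_fst[of "(a, b)" "(a, b')"] entering_unique_fst[of "(a, b')" "(a, b)"]
      mate_unique_F[of a b b'] unfolding augmented_def by auto
  show "a = a'" if "(a, b) \<in> augmented" "(a', b) \<in> augmented" for a a' b
    using that entering_unique_snd[of "(a, b)" "(a', b)"] entering_unique_snd[of "(a', b)" "(a, b)"]
      mate_unique_V[of a b a'] unfolding augmented_def by auto
qed

lemma card_augmented: "card augmented = Suc (card M)"
proof -
  have "card augmented = card (M - leaving) + card entering"
    unfolding augmented_def using finite_M entering_subset(2)
    by (intro card_Un_disjoint) (auto simp: entering_def)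
  also have "card (M - leaving) = card M - (half_length - 1)"
    using card_Diff_subset[OF _ leaving_subset] card_leaving by (auto simp: leaving_def)
  finally show ?thesis
    using card_mono[OF finite_M leaving_subset] card_entering card_leaving length_eq by simp
qed

end

section \<open>The coarse decomposition\<close>

context bipartite_matching
begin

lemma no_augmenting_path:
  assumes "max_matching E M" "alternating_path E M p" "hd p \<in> unmatched V M"
  shows "last p \<notin> unmatched F M"
proof
  assume "last p \<in> unmatched F M"
  then interpret augmenting_path V F E M p
    using assms(2,3) by unfold_locales
  show False
    using assms(1) augmented_subset matching_augmented card_augmented
    unfolding max_matching_def by (metis Suc_n_not_le_n)
qed


lemma TI_disjoint_unmatched_F:
  assumes "max_matching E M"
  shows "TI \<inter> unmatched F M = {}"
  using no_augmenting_path[OF assms] unfolding alt_reach_def by blast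

definition mate :: "'a \<Rightarrow> 'a" where
  "mate a = (SOME b. (a, b) \<in> M)"

lemma mate_eq: "(a, b) \<in> M \<Longrightarrow> mate a = b"
  using someI[of "\<lambda>b. (a, b) \<in> M" b] mate_unique_F unfolding mate_def by blast

lemma mate_in_M:
  assumes "a \<in> V" "a \<notin> unmatched V M"
  shows "(a, mate a) \<in> M"
proof -
  obtain b where "(a, b) \<in> M \<or> (b, a) \<in> M" using assms unfolding unmatched_def by blast
  then have "(a, b) \<in> M" using assms(1) matching_subset_edges edges_between sides_disjoint by auto
  then show ?thesis using mate_eq by simp
qed

lemma inj_on_mate: "inj_on mate (V - unmatched V M)"
  by (rule inj_onI) (metis DiffE mate_in_M mate_unique_V)

lemma card_le_adj_plus_unmatched:
  assumes X: "X \<subseteq> V"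
  shows "card X \<le> card (adj E X) + card (unmatched V M)"
proof -
  let ?U = "unmatched V M"
  have "mate ` (X - ?U) \<subseteq> adj E X"
    using mate_in_M X matching_subset_edges by (auto simp: adj_def)
  moreover have "inj_on mate (X - ?U)" using X by (intro inj_on_subset[OF inj_on_mate]) blast
  ultimately have "card (X - ?U) \<le> card (adj E X)"
    using card_inj_on_le finite_subset[OF adj_F_subset[OF X] finite_F] by blast
  moreover have "card (X \<inter> ?U) \<le> card ?U"
    using finite_subset[OF unmatched_subset finite_V] by (intro card_mono) auto
  moreover have "card X = card (X \<inter> ?U) + card (X - ?U)"
    using card_Int_Diff finite_subset[OF X finite_V] by blast
  ultimately show ?thesis by linarith
qed

lemma adj_V_TI: "adj E (V \<inter> TI) = F \<inter> TI"
proof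
  show "adj E (V \<inter> TI) \<subseteq> F \<inter> TI"
    using TI_edge_closed edges_between sides_disjoint by (auto simp: adj_def)
  show "F \<inter> TI \<subseteq> adj E (V \<inter> TI)"
    using TI_F_has_neighbour by (auto simp: adj_def)
qed

lemma card_V_TI:
  assumes "max_matching E M"
  shows "card (V \<inter> TI) = card (F \<inter> TI) + card (unmatched V M)"
proof -
  let ?U = "unmatched V M"
  have "mate ` (V \<inter> TI - ?U) = F \<inter> TI"
  proof
    show "mate ` (V \<inter> TI - ?U) \<subseteq> F \<inter> TI"
    proof
      fix b assume "b \<in> mate ` (V \<inter> TI - ?U)"
      then obtain a where a: "a \<in> V" "a \<in> TI" "a \<notin> ?U" "b = mate a" by blast
      then have "(a, b) \<in> E" using mate_in_M matching_subset_edges by blast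
      then show "b \<in> F \<inter> TI" using TI_edge_closed[of a b] a edges_between by blast
    qed
    show "F \<inter> TI \<subseteq> mate ` (V \<inter> TI - ?U)"
    proof
      fix b assume b: "b \<in> F \<inter> TI"
      then have "b \<notin> unmatched F M" using TI_disjoint_unmatched_F[OF assms] by blast
      then obtain a where "(a, b) \<in> M \<or> (b, a) \<in> M" using b unfolding unmatched_def by blast
      then have ab: "(a, b) \<in> M" using b matching_subset_edges edges_between sides_disjoint by auto
      have "a \<in> V" using ab matching_subset_edges edges_between by blast
      moreover have "a \<in> TI" using TI_mate_closed[of b a] b ab by blast
      moreover have "a \<notin> ?U" using ab by (auto simp: unmatched_def)
      ultimately have "mate a \<in> mate ` (V \<inter> TI - ?U)" by blast
      then show "b \<in> mate ` (V \<inter> TI - ?U)" using mate_eq[OF ab] by simp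
    qed
  qed
  moreover have "inj_on mate (V \<inter> TI - ?U)" by (rule inj_on_subset[OF inj_on_mate]) blast
  ultimately have "card (V \<inter> TI - ?U) = card (F \<inter> TI)" using card_image by fastforce
  moreover have "card (V \<inter> TI) = card ?U + card (V \<inter> TI - ?U)"
  proof -
    have "?U \<subseteq> V \<inter> TI"
      using unmatched_subset_alt_reach[of V M E] unmatched_subset[of V M] by blast
    then show ?thesis using card_Int_Diff[of "V \<inter> TI" ?U] finite_V by (simp add: Int_absorb1)
  qed
  ultimately show ?thesis by simp
qed

lemma tight_setD:
  assumes X: "X \<subseteq> V" and tight: "card X = card (adj E X) + card (unmatched V M)"
  shows "unmatched V M \<subseteq> X" "mate ` (X - unmatched V M) = adj E X"
proof -
  let ?U = "unmatched V M"
  have fin: "finite ?U" "finite (adj E X)" "finite X"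
    using finite_subset[OF unmatched_subset finite_V] finite_subset[OF adj_F_subset[OF X] finite_F]
      finite_subset[OF X finite_V] by auto
  have sub: "mate ` (X - ?U) \<subseteq> adj E X"
    using mate_in_M X matching_subset_edges by (auto simp: adj_def)
  have inj: "inj_on mate (X - ?U)" using X by (intro inj_on_subset[OF inj_on_mate]) blast
  have le1: "card (X - ?U) \<le> card (adj E X)" using card_inj_on_le[OF inj sub fin(2)] .
  have le2: "card (X \<inter> ?U) \<le> card ?U" using fin(1) by (intro card_mono) auto
  have sum: "card X = card (X \<inter> ?U) + card (X - ?U)" using card_Int_Diff fin(3) by blast
  have "card (X \<inter> ?U) = card ?U" using le1 le2 sum tight by linarith
  then show "?U \<subseteq> X" using card_subset_eq[OF fin(1), of "X \<inter> ?U"] by blast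
  have "card (mate ` (X - ?U)) = card (adj E X)"
    using le1 le2 sum tight card_image[OF inj] by linarith
  then show "mate ` (X - ?U) = adj E X" using card_subset_eq[OF fin(2) sub] by blast
qed

lemma tight_set_contains_even_vertices:
  assumes X: "X \<subseteq> V" and tight: "card X = card (adj E X) + card (unmatched V M)"
    and p: "alternating_path E M p" "hd p \<in> unmatched V M" and j: "2 * j < length p"
  shows "p ! (2 * j) \<in> X"
  using j
proof (induction j)
  case 0
  have "p \<noteq> []" using p(1) by (simp add: alternating_path_iff)
  then show ?case using p(2) tight_setD(1)[OF X tight] by (auto simp: hd_conv_nth)
next
  case (Suc j)
  have hd: "hd p \<in> V" using p(2) by (simp add: unmatched_def)
  have l1: "Suc (2 * j) < length p" and l2: "Suc (Suc (2 * j)) < length p" using Suc.prems by auto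
  have "p ! (2 * j) \<in> X" "p ! (2 * j) \<in> V" "p ! Suc (2 * j) \<in> F"
    using Suc alternating_path_sides[OF p(1) hd, of "2 * j"]
      alternating_path_sides[OF p(1) hd, of "Suc (2 * j)"] by auto
  moreover have "(p ! (2 * j), p ! Suc (2 * j)) \<in> E"
    using adjacent_from_V[OF subset_refl alternating_pathD(1)[OF p(1) l1]] calculation by blast
  ultimately have "p ! Suc (2 * j) \<in> adj E X" by (auto simp: adj_def)
  then obtain a' where a': "a' \<in> X - unmatched V M" "mate a' = p ! Suc (2 * j)"
    using tight_setD(2)[OF X tight] by (metis imageE)
  have "(a', p ! Suc (2 * j)) \<in> M" using mate_in_M[of a'] a' X by auto
  moreover have "(p ! Suc (Suc (2 * j)), p ! Suc (2 * j)) \<in> M"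
    using alternating_pathD(2)[OF p(1) l2] adjacent_from_F[OF matching_subset_edges]
      \<open>p ! Suc (2 * j) \<in> F\<close> by auto
  ultimately have "a' = p ! Suc (Suc (2 * j))" using mate_unique_V by blast
  then show ?case using a' by simp
qed

lemma V_TI_subset_tight:
  assumes X: "X \<subseteq> V" and tight: "card X = card (adj E X) + card (unmatched V M)"
  shows "V \<inter> TI \<subseteq> X"
proof
  fix a assume a: "a \<in> V \<inter> TI"
  then obtain p where p: "alternating_path E M p" "hd p \<in> unmatched V M" "last p = a"
    unfolding alt_reach_def by blast
  have hd: "hd p \<in> V" using p(2) by (simp add: unmatched_def)
  have "p \<noteq> []" using p(1) by (simp add: alternating_path_iff)
  have "even (length p - 1)"
    using alternating_path_last[OF p(1) hd] p(3) a sides_disjoint by (auto split: if_splits)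
  then obtain j where j: "length p - 1 = 2 * j" by (rule evenE)
  have "2 * j < length p" using j \<open>p \<noteq> []\<close> by (cases p) auto
  moreover have "p ! (2 * j) = a" using j p(3) \<open>p \<noteq> []\<close> by (simp add: last_conv_nth)
  ultimately show "a \<in> X" using tight_set_contains_even_vertices[OF X tight p(1,2)] by blast
qed


text \<open>V \<inter> TI and F \<inter> TO are tight (the latter in the converse graph). Removing from each of them
  the neighbours of the other does not decrease its deficiency, so by the minimality of V \<inter> TI
  among tight sets nothing is removed.\<close>

lemma V_TI_disjoint_adj_F_TO:
  assumes max: "max_matching E M"
  shows "V \<inter> TI \<inter> adj E (F \<inter> TO) = {}" "adj E (V \<inter> TI) \<inter> (F \<inter> TO) = {}"
proof -
  interpret conv: bipartite_matching F V "E\<inverse>" "M\<inverse>" by (rule converse_matching)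
  have max': "max_matching (E\<inverse>) (M\<inverse>)" using max by simp
  define X where "X = V \<inter> TI"
  define Y where "Y = F \<inter> TO"
  have X: "X \<subseteq> V" "card X = card (adj E X) + card (unmatched V M)"
    using adj_V_TI card_V_TI[OF max] unfolding X_def by auto
  have Y: "Y \<subseteq> F" "card Y = card (adj E Y) + card (unmatched F M)"
    using conv.adj_V_TI conv.card_V_TI[OF max'] unfolding Y_def by auto
  have fin: "finite X" "finite Y" "finite (adj E X)" "finite (adj E Y)"
    using X(1) Y(1) adj_F_subset[OF X(1)] adj_V_subset[OF Y(1)] finite_V finite_F
    by (auto intro: finite_subset)
  define X' where "X' = X - adj E Y"
  define Y' where "Y' = Y - adj E X"
  have adj_X': "adj E X' \<subseteq> adj E X - Y" and adj_Y': "adj E Y' \<subseteq> adj E Y - X"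
    unfolding X'_def Y'_def adj_def by blast+
  have "card X' \<le> card (adj E X') + card (unmatched V M)"
    using card_le_adj_plus_unmatched X(1) unfolding X'_def by blast
  moreover have "Y' \<subseteq> F" using Y(1) unfolding Y'_def by blast
  then have "card Y' \<le> card (adj E Y') + card (unmatched F M)"
    using conv.card_le_adj_plus_unmatched[of Y'] by simp
  moreover have "card (adj E X') \<le> card (adj E X - Y)" "card (adj E Y') \<le> card (adj E Y - X)"
    using card_mono adj_X' adj_Y' fin by (metis finite_Diff)+
  moreover have "card (adj E X) = card (adj E X \<inter> Y) + card (adj E X - Y)"
    "card (adj E Y) = card (adj E Y \<inter> X) + card (adj E Y - X)"
    "card X = card (X \<inter> adj E Y) + card X'" "card Y = card (Y \<inter> adj E X) + card Y'"
    unfolding X'_def Y'_def using card_Int_Diff fin by blast+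
  moreover have "card (adj E X \<inter> Y) = card (Y \<inter> adj E X)"
    "card (adj E Y \<inter> X) = card (X \<inter> adj E Y)" by (simp_all add: Int_commute)
  ultimately have "card (X \<inter> adj E Y) = card (Y \<inter> adj E X)"
    and tight: "card X' = card (adj E X') + card (unmatched V M)"
    using X(2) Y(2) by linarith+
  have "X \<subseteq> X'" using V_TI_subset_tight[OF _ tight] X(1) unfolding X'_def X_def by blast
  then show "X \<inter> adj E Y = {}" unfolding X'_def X_def Y_def by blast
  then have "card (Y \<inter> adj E X) = 0" using \<open>card (X \<inter> adj E Y) = _\<close> by simp
  then show "adj E X \<inter> Y = {}" using fin by auto
qed

lemma TI_TO_disjoint:
  assumes max: "max_matching E M"
  shows "TI \<inter> TO = {}"
proof -
  interpret conv: bipartite_matching F V "E\<inverse>" "M\<inverse>" by (rule converse_matching)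
  have "TI = (V \<inter> TI) \<union> adj E (V \<inter> TI)" using TI_subset adj_V_TI by blast
  moreover have "TO = (F \<inter> TO) \<union> adj E (F \<inter> TO)" using conv.TI_subset conv.adj_V_TI by auto
  ultimately show ?thesis
    using V_TI_disjoint_adj_F_TO[OF max] adj_F_subset[of "V \<inter> TI"] adj_V_subset[of "F \<inter> TO"]
      sides_disjoint by blast
qed


lemma TI_iff_mate_TI: "(a, b) \<in> M \<Longrightarrow> a \<in> TI \<longleftrightarrow> b \<in> TI"
  using TI_edge_closed[of a b] TI_mate_closed[of b a] matching_subset_edges edges_between by blast

lemma TO_iff_mate_TO: "(a, b) \<in> M \<Longrightarrow> a \<in> TO \<longleftrightarrow> b \<in> TO"
proof -
  interpret conv: bipartite_matching F V "E\<inverse>" "M\<inverse>" by (rule converse_matching)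
  show "(a, b) \<in> M \<Longrightarrow> a \<in> TO \<longleftrightarrow> b \<in> TO" using conv.TI_iff_mate_TI[of b a] by auto
qed

lemma matched_outside_TI_TO:
  assumes x: "x \<in> (V \<union> F) - TI - TO"
  obtains y where "y \<in> (V \<union> F) - TI - TO" "(x, y) \<in> M \<or> (y, x) \<in> M"
proof -
  have "x \<notin> unmatched V M" "x \<notin> unmatched F M"
    using x unmatched_subset_alt_reach[of V M E] unmatched_subset_alt_reach[of F M E] by blast+
  then obtain y where y: "(x, y) \<in> M \<or> (y, x) \<in> M" using x unfolding unmatched_def by blast
  then have "y \<in> V \<union> F" using matching_subset_edges edges_between by blast
  moreover have "y \<notin> TI" "y \<notin> TO" using y x TI_iff_mate_TI TO_iff_mate_TO by blast+
  ultimately show ?thesis using that y by blast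
qed

end

lemma TI_independent_of_matching:
  assumes "bipartite_matching V F E M1" "bipartite_matching V F E M2"
    and max1: "max_matching E M1" and max2: "max_matching E M2"
  shows "alt_reach E M1 (unmatched V M1) = alt_reach E M2 (unmatched V M2)"
proof -
  interpret m1: bipartite_matching V F E M1 by fact
  interpret m2: bipartite_matching V F E M2 by fact
  have tight1: "card (V \<inter> m1.TI) = card (adj E (V \<inter> m1.TI)) + card (unmatched V M1)"
    using m1.adj_V_TI m1.card_V_TI[OF max1] by simp
  have tight2: "card (V \<inter> m2.TI) = card (adj E (V \<inter> m2.TI)) + card (unmatched V M2)"
    using m2.adj_V_TI m2.card_V_TI[OF max2] by simp
  have "card (unmatched V M1) = card (unmatched V M2)"
    using m2.card_le_adj_plus_unmatched[of "V \<inter> m1.TI"] m1.card_le_adj_plus_unmatched[of "V \<inter> m2.TI"]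
      tight1 tight2 by simp
  then have "V \<inter> m1.TI = V \<inter> m2.TI"
    using m1.V_TI_subset_tight[of "V \<inter> m2.TI"] m2.V_TI_subset_tight[of "V \<inter> m1.TI"] tight1 tight2
    by auto
  moreover have "F \<inter> m1.TI = F \<inter> m2.TI" using m1.adj_V_TI m2.adj_V_TI calculation by metis
  ultimately show ?thesis using m1.TI_subset m2.TI_subset by blast
qed

section \<open>Algorithm 1\<close>

context bipartite_graph
begin

abbreviation adj_in :: "'a set \<Rightarrow> 'a set \<Rightarrow> 'a set" where
  "adj_in R \<equiv> adj (E \<inter> (R \<times> R))"

definition self_contained_part :: "'a set \<Rightarrow> bool" where
  "self_contained_part R \<longleftrightarrow> R \<subseteq> V \<union> F \<and> self_contained_graph (V \<inter> R) (F \<inter> R) (E \<inter> (R \<times> R))"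

lemma adj_in_subset: "S \<subseteq> F \<Longrightarrow> adj_in R S \<subseteq> V \<inter> R"
  using edges_between sides_disjoint by (auto simp: adj_def)

lemma self_contained_partI:
  assumes R: "R \<subseteq> V \<union> F" and card: "card (F \<inter> R) = card (V \<inter> R)"
    and hall: "\<And>G. G \<subseteq> F \<inter> R \<Longrightarrow> card G \<le> card (adj_in R G)"
  shows "self_contained_part R"
proof -
  have "card (adj_in R (F \<inter> R)) \<le> card (V \<inter> R)"
    using adj_in_subset[of "F \<inter> R" R] finite_V by (intro card_mono) auto
  then have "card (F \<inter> R) = card (adj_in R (F \<inter> R))" using hall[of "F \<inter> R"] card by simp
  then show ?thesis
    using R card hall unfolding self_contained_part_def self_contained_graph_def self_contained_set_def
    by simp
qed

lemma self_contained_partD: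
  assumes "self_contained_part R"
  shows "R \<subseteq> V \<union> F" "card (F \<inter> R) = card (V \<inter> R)" "self_contained_set (E \<inter> (R \<times> R)) (F \<inter> R)"
    "G \<subseteq> F \<inter> R \<Longrightarrow> card G \<le> card (adj_in R G)"
  using assms unfolding self_contained_part_def self_contained_graph_def self_contained_set_def
  by auto

lemma finite_self_contained_part: "self_contained_part R \<Longrightarrow> finite R"
  using self_contained_partD(1) finite_subset finite_V finite_F by blast

lemma self_contained_part_if_perfect_matching:
  assumes R: "R \<subseteq> V \<union> F" and N: "N \<subseteq> E" "matching N"
    and perfect: "\<And>x. x \<in> R \<Longrightarrow> \<exists>y\<in>R. (x, y) \<in> N \<or> (y, x) \<in> N"
  shows "self_contained_part R"
proof -
  have mate_V: "\<exists>v. v \<in> V \<inter> R \<and> (v, f) \<in> N" if "f \<in> F \<inter> R" for f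
    using perfect[of f] that N(1) edges_between sides_disjoint by blast
  have mate_F: "\<exists>f. f \<in> F \<inter> R \<and> (v, f) \<in> N" if "v \<in> V \<inter> R" for v
    using perfect[of v] that N(1) edges_between sides_disjoint by blast
  define g where "g f = (SOME v. v \<in> V \<inter> R \<and> (v, f) \<in> N)" for f
  define h where "h v = (SOME f. f \<in> F \<inter> R \<and> (v, f) \<in> N)" for v
  have g: "g f \<in> V \<inter> R \<and> (g f, f) \<in> N" if "f \<in> F \<inter> R" for f
    using someI_ex[OF mate_V[OF that]] unfolding g_def by blast
  have h: "h v \<in> F \<inter> R \<and> (v, h v) \<in> N" if "v \<in> V \<inter> R" for v
    using someI_ex[OF mate_F[OF that]] unfolding h_def by blast
  have inj_g: "inj_on g (F \<inter> R)"
    by (rule inj_onI) (metis g matching_unique_snd[OF N(2)])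
  have inj_h: "inj_on h (V \<inter> R)"
    by (rule inj_onI) (metis h matching_unique_fst[OF N(2)])
  have "card (F \<inter> R) \<le> card (V \<inter> R)"
    using card_inj_on_le[OF inj_g] g finite_V by blast
  moreover have "card (V \<inter> R) \<le> card (F \<inter> R)"
    using card_inj_on_le[OF inj_h] h finite_F by blast
  moreover have "card G \<le> card (adj_in R G)" if G: "G \<subseteq> F \<inter> R" for G
  proof -
    have "g ` G \<subseteq> adj_in R G" using g G N(1) by (fastforce simp: adj_def)
    moreover have "inj_on g G" using inj_on_subset[OF inj_g G] .
    moreover have "finite (adj_in R G)"
      using adj_in_subset[of G R] G finite_V finite_subset by blast
    ultimately show ?thesis using card_inj_on_le by blast
  qed
  ultimately show ?thesis using R by (intro self_contained_partI) auto
qed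


definition cluster :: "'a set \<Rightarrow> 'a set \<Rightarrow> 'a set" where
  "cluster R S = S \<union> adj_in R S"

definition cluster_edges :: "'a set \<Rightarrow> 'a set \<Rightarrow> ('a \<times> 'a set) set" where
  "cluster_edges R S = {(v, cluster R S) | v. v \<in> adj E S - adj_in R S}"

lemma alg1_step_iff:
  "alg1_step F E (R, Vc, Ec) st' \<longleftrightarrow> R \<noteq> {} \<and>
     (\<exists>S. min_self_contained (F \<inter> R) (E \<inter> (R \<times> R)) S \<and>
        st' = (R - cluster R S, insert (cluster R S) Vc, Ec \<union> cluster_edges R S))"
proof
  assume "alg1_step F E (R, Vc, Ec) st'"
  then show "R \<noteq> {} \<and> (\<exists>S. min_self_contained (F \<inter> R) (E \<inter> (R \<times> R)) S \<and>
        st' = (R - cluster R S, insert (cluster R S) Vc, Ec \<union> cluster_edges R S))"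
    by (cases rule: alg1_step.cases) (auto simp: cluster_def cluster_edges_def)
next
  assume "R \<noteq> {} \<and> (\<exists>S. min_self_contained (F \<inter> R) (E \<inter> (R \<times> R)) S \<and>
        st' = (R - cluster R S, insert (cluster R S) Vc, Ec \<union> cluster_edges R S))"
  then obtain S where "R \<noteq> {}" "min_self_contained (F \<inter> R) (E \<inter> (R \<times> R)) S"
    and st': "st' = (R - cluster R S, insert (cluster R S) Vc, Ec \<union> cluster_edges R S)" by blast
  then show "alg1_step F E (R, Vc, Ec) st'"
    unfolding st' cluster_def cluster_edges_def by (intro alg1_step.intros) auto
qed

lemma min_self_containedD:
  assumes "min_self_contained (F \<inter> R) (E \<inter> (R \<times> R)) S"
  shows "S \<noteq> {}" "S \<subseteq> F \<inter> R" "card S = card (adj_in R S)"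
    "G \<subseteq> S \<Longrightarrow> card G \<le> card (adj_in R G)"
    "S' \<subset> S \<Longrightarrow> S' \<noteq> {} \<Longrightarrow> \<not> self_contained_set (E \<inter> (R \<times> R)) S'"
proof -
  have sc: "self_contained_set (E \<inter> (R \<times> R)) S" using assms unfolding min_self_contained_def by blast
  show "S \<noteq> {}" "S \<subseteq> F \<inter> R"
    "S' \<subset> S \<Longrightarrow> S' \<noteq> {} \<Longrightarrow> \<not> self_contained_set (E \<inter> (R \<times> R)) S'"
    using assms unfolding min_self_contained_def by blast+
  show "card S = card (adj_in R S)" "G \<subseteq> S \<Longrightarrow> card G \<le> card (adj_in R G)"
    using sc unfolding self_contained_set_def by blast+
qed

lemma cluster_subset:
  assumes "min_self_contained (F \<inter> R) (E \<inter> (R \<times> R)) S"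
  shows "cluster R S \<subseteq> R" "cluster R S \<noteq> {}"
  using min_self_containedD(1,2)[OF assms] adj_in_subset[of S R] unfolding cluster_def by auto

lemma hall_after_removal:
  assumes R: "self_contained_part R" and S: "min_self_contained (F \<inter> R) (E \<inter> (R \<times> R)) S"
    and G: "G \<subseteq> F \<inter> (R - cluster R S)"
  shows "card G \<le> card (adj_in (R - cluster R S) G)"
proof -
  let ?R' = "R - cluster R S"
  have SF: "S \<subseteq> F" and GF: "G \<subseteq> F" using min_self_containedD(2)[OF S] G by auto
  have fin: "finite G" "finite S" "finite (adj_in R G)" "finite (adj_in R S)"
    using finite_subset[OF SF finite_F] finite_subset[OF GF finite_F]
      finite_subset[OF adj_in_subset[OF GF, of R]] finite_subset[OF adj_in_subset[OF SF, of R]] finite_V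
    by auto
  have "G \<inter> S = {}" using G unfolding cluster_def by blast
  have "G \<union> S \<subseteq> F \<inter> R" using G min_self_containedD(2)[OF S] by blast
  then have "card (G \<union> S) \<le> card (adj_in R (G \<union> S))" by (rule self_contained_partD(4)[OF R])
  moreover have "card (G \<union> S) = card G + card S"
    using card_Un_disjoint fin \<open>G \<inter> S = {}\<close> by blast
  moreover have "adj_in R (G \<union> S) = (adj_in R G - adj_in R S) \<union> adj_in R S" by (auto simp: adj_def)
  moreover have "card ((adj_in R G - adj_in R S) \<union> adj_in R S) =
      card (adj_in R G - adj_in R S) + card (adj_in R S)"
    using fin by (intro card_Un_disjoint) auto
  ultimately have "card G + card S \<le> card (adj_in R G - adj_in R S) + card (adj_in R S)" by simp
  then have "card G \<le> card (adj_in R G - adj_in R S)" using min_self_containedD(3)[OF S] by linarith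
  also have "\<dots> \<le> card (adj_in ?R' G)"
  proof (rule card_mono)
    show "finite (adj_in ?R' G)" using finite_subset[OF adj_in_subset[OF GF, of ?R']] finite_V by blast
    show "adj_in R G - adj_in R S \<subseteq> adj_in ?R' G"
      using G adj_in_subset[OF GF, of R] SF sides_disjoint unfolding cluster_def adj_def by blast
  qed
  finally show ?thesis .
qed

lemma self_contained_part_remove_cluster:
  assumes R: "self_contained_part R" and S: "min_self_contained (F \<inter> R) (E \<inter> (R \<times> R)) S"
  shows "self_contained_part (R - cluster R S)"
proof (rule self_contained_partI)
  have SF: "S \<subseteq> F \<inter> R" and card_S: "card S = card (adj_in R S)" using min_self_containedD[OF S] by auto
  have "F \<inter> (R - cluster R S) = F \<inter> R - S" "V \<inter> (R - cluster R S) = V \<inter> R - adj_in R S"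
    using SF adj_in_subset[of S R] sides_disjoint unfolding cluster_def by auto
  moreover have "finite S" "finite (adj_in R S)"
    using SF adj_in_subset[of S R] finite_F finite_V by (auto intro: finite_subset)
  ultimately show "card (F \<inter> (R - cluster R S)) = card (V \<inter> (R - cluster R S))"
    using card_S self_contained_partD(2)[OF R] SF adj_in_subset[of S R] by (simp add: card_Diff_subset)
  show "R - cluster R S \<subseteq> V \<union> F" using self_contained_partD(1)[OF R] by blast
qed (rule hall_after_removal[OF R S])

lemma min_self_contained_exists:
  assumes R: "self_contained_part R" and "R \<noteq> {}"
  obtains S where "min_self_contained (F \<inter> R) (E \<inter> (R \<times> R)) S"
proof -
  have "F \<inter> R \<noteq> {}"
  proof
    assume "F \<inter> R = {}"
    then have "V \<inter> R = {}" using self_contained_partD(2)[OF R] finite_V by simp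
    then show False using \<open>F \<inter> R = {}\<close> \<open>R \<noteq> {}\<close> self_contained_partD(1)[OF R] by blast
  qed
  define P where "P S \<longleftrightarrow> S \<noteq> {} \<and> S \<subseteq> F \<inter> R \<and> self_contained_set (E \<inter> (R \<times> R)) S" for S
  have "P (F \<inter> R)" unfolding P_def using \<open>F \<inter> R \<noteq> {}\<close> self_contained_partD(3)[OF R] by simp
  then obtain S where S: "P S" and least: "\<And>S'. P S' \<Longrightarrow> card S \<le> card S'"
    using ex_has_least_nat[of P "F \<inter> R" card] by blast
  have "finite S" using S finite_F finite_subset unfolding P_def by blast
  then have "\<not> self_contained_set (E \<inter> (R \<times> R)) S'" if "S' \<subset> S" "S' \<noteq> {}" for S'
    using least[of S'] psubset_card_mono[of S S'] that S unfolding P_def by force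
  then have "min_self_contained (F \<inter> R) (E \<inter> (R \<times> R)) S"
    using S unfolding P_def min_self_contained_def by blast
  then show ?thesis by (rule that)
qed


lemma min_self_contained_disjoint:
  assumes R: "self_contained_part R"
    and S1: "min_self_contained (F \<inter> R) (E \<inter> (R \<times> R)) S1"
    and S2: "min_self_contained (F \<inter> R) (E \<inter> (R \<times> R)) S2" and "S1 \<noteq> S2"
  shows "S1 \<inter> S2 = {}" "adj_in R S1 \<inter> adj_in R S2 = {}"
proof -
  note s1 = min_self_containedD[OF S1] and s2 = min_self_containedD[OF S2]
  have F12: "S1 \<subseteq> F" "S2 \<subseteq> F" using s1(2) s2(2) by auto
  have fin: "finite S1" "finite S2" "finite (adj_in R S1)" "finite (adj_in R S2)"
    using finite_subset[OF F12(1) finite_F] finite_subset[OF F12(2) finite_F]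
      finite_subset[OF adj_in_subset[OF F12(1), of R]] finite_subset[OF adj_in_subset[OF F12(2), of R]]
      finite_V by auto
  let ?I = "S1 \<inter> S2"
  have "card (S1 \<union> S2) \<le> card (adj_in R (S1 \<union> S2))"
    using s1(2) s2(2) by (intro self_contained_partD(4)[OF R]) blast
  then have "card (S1 \<union> S2) \<le> card (adj_in R S1 \<union> adj_in R S2)" by (simp add: adj_Un)
  moreover have "card ?I \<le> card (adj_in R ?I)" by (rule s1(4)) blast
  moreover have "card (adj_in R ?I) \<le> card (adj_in R S1 \<inter> adj_in R S2)"
    using adj_mono[of ?I S1] adj_mono[of ?I S2] fin by (intro card_mono) auto
  moreover have "card (S1 \<union> S2) + card ?I = card S1 + card S2"
    using card_Un_Int[OF fin(1,2)] by simp
  moreover have "card (adj_in R S1 \<union> adj_in R S2) + card (adj_in R S1 \<inter> adj_in R S2) =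
      card (adj_in R S1) + card (adj_in R S2)"
    using card_Un_Int[OF fin(3,4)] by simp
  ultimately have card_I: "card ?I = card (adj_in R ?I)"
    and card_A: "card (adj_in R S1 \<inter> adj_in R S2) = card ?I"
    using s1(3) s2(3) by linarith+
  show "?I = {}"
  proof (rule ccontr)
    assume "?I \<noteq> {}"
    have "self_contained_set (E \<inter> (R \<times> R)) ?I"
      unfolding self_contained_set_def using card_I s1(4) by auto
    moreover have "?I \<subset> S1 \<or> ?I \<subset> S2" using \<open>S1 \<noteq> S2\<close> by blast
    ultimately show False using s1(5) s2(5) \<open>?I \<noteq> {}\<close> by blast
  qed
  then show "adj_in R S1 \<inter> adj_in R S2 = {}" using card_A fin by simp
qed

lemma adj_in_after_removal:
  assumes R: "self_contained_part R"
    and S1: "min_self_contained (F \<inter> R) (E \<inter> (R \<times> R)) S1"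
    and S2: "min_self_contained (F \<inter> R) (E \<inter> (R \<times> R)) S2" and "S1 \<noteq> S2"
    and T: "T \<subseteq> S2"
  shows "T \<subseteq> R - cluster R S1" "adj_in (R - cluster R S1) T = adj_in R T"
proof -
  let ?R1 = "R - cluster R S1"
  note disj = min_self_contained_disjoint[OF R S1 S2 \<open>S1 \<noteq> S2\<close>]
  have F12: "S1 \<subseteq> F" "S2 \<subseteq> F" using min_self_containedD(2)[OF S1] min_self_containedD(2)[OF S2]
    by auto
  show T_R1: "T \<subseteq> ?R1"
    using T min_self_containedD(2)[OF S2] disj(1) adj_in_subset[OF F12(1), of R] F12(2)
      sides_disjoint unfolding cluster_def by blast
  show "adj_in ?R1 T = adj_in R T"
  proof
    show "adj_in ?R1 T \<subseteq> adj_in R T" by (intro adj_mono_edges) auto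
    show "adj_in R T \<subseteq> adj_in ?R1 T"
    proof
      fix y assume y: "y \<in> adj_in R T"
      then have "y \<in> adj_in R S2" using adj_mono[OF T] by blast
      then have "y \<notin> adj_in R S1" "y \<in> V" using disj(2) adj_in_subset[OF F12(2), of R] by auto
      then have "y \<in> ?R1" using y F12(1) sides_disjoint unfolding cluster_def adj_def by auto
      moreover obtain x where "x \<in> T" "(x, y) \<in> E \<inter> (R \<times> R) \<or> (y, x) \<in> E \<inter> (R \<times> R)"
        using y unfolding adj_def by blast
      moreover have "x \<in> ?R1" using \<open>x \<in> T\<close> T_R1 by blast
      ultimately show "y \<in> adj_in ?R1 T" unfolding adj_def by blast
    qed
  qed
qed

lemma min_self_contained_after_removal:
  assumes R: "self_contained_part R"
    and S1: "min_self_contained (F \<inter> R) (E \<inter> (R \<times> R)) S1"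
    and S2: "min_self_contained (F \<inter> R) (E \<inter> (R \<times> R)) S2" and "S1 \<noteq> S2"
  defines "R1 \<equiv> R - cluster R S1"
  shows "min_self_contained (F \<inter> R1) (E \<inter> (R1 \<times> R1)) S2"
    "cluster R1 S2 = cluster R S2" "cluster_edges R1 S2 = cluster_edges R S2"
proof -
  note adj_eq = adj_in_after_removal[OF R S1 S2 \<open>S1 \<noteq> S2\<close>, folded R1_def]
  have sc_eq: "self_contained_set (E \<inter> (R1 \<times> R1)) T = self_contained_set (E \<inter> (R \<times> R)) T"
    if T: "T \<subseteq> S2" for T
  proof -
    have "adj_in R1 G = adj_in R G" if "G \<subseteq> T" for G using adj_eq(2) that T by blast
    then show ?thesis unfolding self_contained_set_def by auto
  qed
  show "min_self_contained (F \<inter> R1) (E \<inter> (R1 \<times> R1)) S2"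
    unfolding min_self_contained_def
  proof (intro conjI allI impI)
    show "S2 \<noteq> {}" "S2 \<subseteq> F \<inter> R1" using min_self_containedD(1,2)[OF S2] adj_eq(1) by auto
    show "self_contained_set (E \<inter> (R1 \<times> R1)) S2"
      using sc_eq[of S2] S2 unfolding min_self_contained_def by blast
    fix S' assume "S' \<subset> S2 \<and> S' \<noteq> {}"
    then show "\<not> self_contained_set (E \<inter> (R1 \<times> R1)) S'"
      using sc_eq[of S'] min_self_containedD(5)[OF S2, of S'] by blast
  qed
  show "cluster R1 S2 = cluster R S2" unfolding cluster_def using adj_eq(2) by simp
  then show "cluster_edges R1 S2 = cluster_edges R S2" unfolding cluster_edges_def using adj_eq(2) by simp
qed


text \<open>Algorithm 1 is confluent only on states whose remaining graph is self-contained; all states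
  reachable from a self-contained input are of this kind.\<close>

definition alg1_step_sc :: "'a alg1_state \<Rightarrow> 'a alg1_state \<Rightarrow> bool" where
  "alg1_step_sc st st' \<longleftrightarrow> self_contained_part (fst st) \<and> alg1_step F E st st'"

lemma self_contained_part_alg1_step:
  assumes "alg1_step F E st st'" "self_contained_part (fst st)"
  shows "self_contained_part (fst st')"
proof -
  obtain R Vc Ec where st: "st = (R, Vc, Ec)" by (cases st)
  then obtain S where "min_self_contained (F \<inter> R) (E \<inter> (R \<times> R)) S"
    and "st' = (R - cluster R S, insert (cluster R S) Vc, Ec \<union> cluster_edges R S)"
    using assms(1) unfolding st alg1_step_iff by blast
  then show ?thesis using self_contained_part_remove_cluster assms(2) st by simp
qed

lemma alg1_steps_imp_sc_steps:
  assumes "(alg1_step F E)\<^sup>*\<^sup>* st st'" "self_contained_part (fst st)"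
  shows "alg1_step_sc\<^sup>*\<^sup>* st st' \<and> self_contained_part (fst st')"
  using assms(1)
proof (induction rule: rtranclp_induct)
  case base
  then show ?case using assms(2) by simp
next
  case (step st' st'')
  then have "alg1_step_sc st' st''" by (simp add: alg1_step_sc_def)
  then show ?case using step self_contained_part_alg1_step by (meson rtranclp.rtrancl_into_rtrancl)
qed

lemma alg1_step_sc_commute:
  assumes R: "self_contained_part R"
    and S1: "min_self_contained (F \<inter> R) (E \<inter> (R \<times> R)) S1"
    and S2: "min_self_contained (F \<inter> R) (E \<inter> (R \<times> R)) S2" and "S1 \<noteq> S2"
  shows "alg1_step_sc (R - cluster R S1, insert (cluster R S1) Vc, Ec \<union> cluster_edges R S1)
    (R - cluster R S1 - cluster R S2, insert (cluster R S2) (insert (cluster R S1) Vc),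
      Ec \<union> cluster_edges R S1 \<union> cluster_edges R S2)"
proof -
  note after = min_self_contained_after_removal[OF R S1 S2 \<open>S1 \<noteq> S2\<close>]
  have "R - cluster R S1 \<noteq> {}" using min_self_containedD(1,2)[OF after(1)] by blast
  then show ?thesis
    using after self_contained_part_remove_cluster[OF R S1]
    unfolding alg1_step_sc_def alg1_step_iff by auto
qed

lemma strong_confluentp_alg1_step_sc: "strong_confluentp alg1_step_sc"
proof
  fix x y z assume xy: "alg1_step_sc x y" and xz: "alg1_step_sc x z"
  obtain R Vc Ec where x: "x = (R, Vc, Ec)" by (cases x)
  have R: "self_contained_part R" using xy x by (simp add: alg1_step_sc_def)
  obtain S1 where S1: "min_self_contained (F \<inter> R) (E \<inter> (R \<times> R)) S1"
    and y: "y = (R - cluster R S1, insert (cluster R S1) Vc, Ec \<union> cluster_edges R S1)"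
    using xy x by (auto simp: alg1_step_sc_def alg1_step_iff)
  obtain S2 where S2: "min_self_contained (F \<inter> R) (E \<inter> (R \<times> R)) S2"
    and z: "z = (R - cluster R S2, insert (cluster R S2) Vc, Ec \<union> cluster_edges R S2)"
    using xz x by (auto simp: alg1_step_sc_def alg1_step_iff)
  show "\<exists>u. alg1_step_sc\<^sup>*\<^sup>* y u \<and> alg1_step_sc\<^sup>=\<^sup>= z u"
  proof (cases "S1 = S2")
    case True
    then show ?thesis using y z by auto
  next
    case False
    have "(R - cluster R S1 - cluster R S2, insert (cluster R S2) (insert (cluster R S1) Vc),
        Ec \<union> cluster_edges R S1 \<union> cluster_edges R S2) =
      (R - cluster R S2 - cluster R S1, insert (cluster R S1) (insert (cluster R S2) Vc),
        Ec \<union> cluster_edges R S2 \<union> cluster_edges R S1)"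
      by (auto simp: insert_commute)
    then show ?thesis
      using alg1_step_sc_commute[OF R S1 S2 False] alg1_step_sc_commute[OF R S2 S1 False[symmetric]] y z
      by (metis r_into_rtranclp sup2CI)
  qed
qed

lemma alg1_step_terminates:
  "self_contained_part R \<Longrightarrow> \<exists>Vc' Ec'. (alg1_step F E)\<^sup>*\<^sup>* (R, Vc, Ec) ({}, Vc', Ec')"
proof (induction "card R" arbitrary: R Vc Ec rule: less_induct)
  case less
  show ?case
  proof (cases "R = {}")
    case False
    then obtain S where S: "min_self_contained (F \<inter> R) (E \<inter> (R \<times> R)) S"
      using min_self_contained_exists[OF less.prems] by blast
    let ?st = "(R - cluster R S, insert (cluster R S) Vc, Ec \<union> cluster_edges R S)"
    have "alg1_step F E (R, Vc, Ec) ?st" using False S by (auto simp: alg1_step_iff)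
    moreover have "card (R - cluster R S) < card R"
      using cluster_subset[OF S] finite_self_contained_part[OF less.prems]
      by (intro psubset_card_mono) auto
    then obtain Vc' Ec' where "(alg1_step F E)\<^sup>*\<^sup>* ?st ({}, Vc', Ec')"
      using less.hyps self_contained_part_remove_cluster[OF less.prems S] by blast
    ultimately show ?thesis by (meson converse_rtranclp_into_rtranclp)
  qed blast
qed

lemma alg1_steps_from_empty: "(alg1_step F E)\<^sup>*\<^sup>* ({}, Vc, Ec) st \<Longrightarrow> st = ({}, Vc, Ec)"
  by (erule converse_rtranclpE) (auto simp: alg1_step_iff)

lemma alg1_final_state_unique:
  assumes R: "self_contained_part R"
    and "(alg1_step F E)\<^sup>*\<^sup>* (R, Vc, Ec) ({}, Vc1, Ec1)" "(alg1_step F E)\<^sup>*\<^sup>* (R, Vc, Ec) ({}, Vc2, Ec2)"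
  shows "Vc1 = Vc2 \<and> Ec1 = Ec2"
proof -
  have "alg1_step_sc\<^sup>*\<^sup>* (R, Vc, Ec) ({}, Vc1, Ec1)" "alg1_step_sc\<^sup>*\<^sup>* (R, Vc, Ec) ({}, Vc2, Ec2)"
    using alg1_steps_imp_sc_steps assms by auto
  then obtain u where "alg1_step_sc\<^sup>*\<^sup>* ({}, Vc1, Ec1) u" "alg1_step_sc\<^sup>*\<^sup>* ({}, Vc2, Ec2) u"
    using confluentpD[OF strong_confluentp_imp_confluentp[OF strong_confluentp_alg1_step_sc]] by blast
  moreover have "alg1_step_sc\<^sup>*\<^sup>* \<le> (alg1_step F E)\<^sup>*\<^sup>*"
    by (rule rtranclp_mono) (auto simp: alg1_step_sc_def)
  ultimately show ?thesis using alg1_steps_from_empty by (metis predicate2D prod.inject)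
qed

lemma alg1_steps_partition:
  assumes "(alg1_step F E)\<^sup>*\<^sup>* (R0, {}, {}) st" "self_contained_part R0"
  shows "fst st \<subseteq> R0 \<and> partition_on (R0 - fst st) (fst (snd st))"
  using assms(1)
proof (induction rule: rtranclp_induct)
  case base
  then show ?case by (simp add: partition_on_empty)
next
  case (step st st')
  obtain R Vc Ec where st: "st = (R, Vc, Ec)" by (cases st)
  have IH: "R \<subseteq> R0" "partition_on (R0 - R) Vc" using step.IH st by auto
  obtain S where S: "min_self_contained (F \<inter> R) (E \<inter> (R \<times> R)) S"
    and "st' = (R - cluster R S, insert (cluster R S) Vc, Ec \<union> cluster_edges R S)"
    using step.hyps(2) unfolding st alg1_step_iff by blast
  then have st': "fst st' = R - cluster R S" "fst (snd st') = insert (cluster R S) Vc" by simp_all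
  have "disjnt (cluster R S) (\<Union>Vc)"
    using partition_onD1[OF IH(2)] cluster_subset(1)[OF S] by (auto simp: disjnt_def)
  moreover have "R0 - fst st' - cluster R S = R0 - R" "cluster R S \<subseteq> R0 - fst st'"
    using cluster_subset(1)[OF S] IH(1) st' by auto
  ultimately have "partition_on (R0 - fst st') (fst (snd st'))"
    using partition_on_insert IH(2) cluster_subset(2)[OF S] st'(2) by metis
  then show ?case using IH(1) st' by auto
qed


lemma alg1_well_defined_if_self_contained:
  assumes VF: "self_contained_part (V \<union> F)"
  shows "alg1_well_defined V F E {}"
  unfolding alg1_well_defined_def
proof (intro conjI allI impI)
  show "self_contained_graph (V - {}) F (E \<inter> ((V - {} \<union> F) \<times> (V - {} \<union> F)))"
    using VF unfolding self_contained_part_def by (simp add: Int_absorb2)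
  fix R Vc Ec assume reach: "alg1_reachable V F E {} (R, Vc, Ec) \<and> R \<noteq> {}"
  then have "self_contained_part R"
    using alg1_steps_imp_sc_steps VF by (fastforce simp: alg1_reachable_def alg1_init_def)
  then obtain S where "min_self_contained (F \<inter> R) (E \<inter> (R \<times> R)) S"
    using min_self_contained_exists reach by blast
  then show "\<exists>st'. alg1_step F E (R, Vc, Ec) st'" using reach by (auto simp: alg1_step_iff)
qed

lemma alg1_output_unique_if_self_contained:
  assumes VF: "self_contained_part (V \<union> F)"
  shows "\<exists>!out. alg1_output V F E {} out"
proof -
  have init: "alg1_init V F {} = (V \<union> F, {}, {})" by (simp add: alg1_init_def)
  show ?thesis
    using alg1_step_terminates[OF VF] alg1_final_state_unique[OF VF]
    unfolding alg1_output_def alg1_reachable_def init by blast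
qed

lemma alg1_output_partition:
  assumes "self_contained_part (V \<union> F)" "alg1_output V F E {} out"
  shows "partition_on (V \<union> F) (fst out)"
  using assms alg1_steps_partition
  by (fastforce simp: alg1_output_def alg1_reachable_def alg1_init_def)

end

section \<open>Algorithm 3\<close>

lemma ex1_pair_image:
  assumes "\<exists>!p. P p"
  shows "\<exists>!y. \<exists>a b. P (a, b) \<and> y = f a b"
proof -
  obtain a b where ab: "P (a, b)" and unique: "\<And>p. P p \<Longrightarrow> p = (a, b)"
    using assms by (metis prod.exhaust)
  show ?thesis by (rule ex1I[of _ "f a b"]) (use ab unique in auto)
qed

lemma partition_components: "partition_on S (components S R)"
proof -
  define Q where "Q = (R \<union> R\<inverse>) \<inter> (S \<times> S)"
  define r where "r = {(x, y). x \<in> S \<and> y \<in> S \<and> (x, y) \<in> Q\<^sup>*}"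
  have "sym (Q\<^sup>*)" by (rule sym_rtrancl) (auto simp: Q_def sym_def)
  then have "equiv S r"
    unfolding r_def by (intro equivI refl_onI symI transI) (auto dest: symD rtrancl_trans)
  moreover have "components S R = S // r"
    unfolding components_def quotient_def Q_def r_def by auto
  ultimately show ?thesis using partition_on_quotient by metis
qed

lemma partition_on_Un:
  assumes "partition_on A P" "partition_on B Q" "A \<inter> B = {}"
  shows "partition_on (A \<union> B) (P \<union> Q)"
  using assms disjoint_union unfolding partition_on_def by fastforce

lemma bipartite_matching_alg3:
  assumes "finite V" "finite F" "bipartite V F E" "max_matching (alg3_E' V F E W) M"
  shows "bipartite_matching (V - W) F (alg3_E' V F E W) M"
  using assms unfolding bipartite_matching_def bipartite_matching_axioms_def bipartite_graph_def
    bipartite_def alg3_E'_def max_matching_def by auto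

lemma alg3_parts_eq:
  "alg3_TI V F E W M = alt_reach (alg3_E' V F E W) M (unmatched (V - W) M)"
  "alg3_TO V F E W M = alt_reach (alg3_E' V F E W) M (unmatched F M)"
  "alg3_TC V F E W M = ((V - W) \<union> F) - alg3_TI V F E W M - alg3_TO V F E W M"
  by (simp_all add: alg3_TI_def alg3_TO_def alg3_TC_def coarse_I_def coarse_O_def coarse_C_def)

lemma alg3_coarse_decomposition_unique:
  assumes fin: "finite V" "finite F" and bip: "bipartite V F E"
    and max1: "max_matching (alg3_E' V F E W) M1" and max2: "max_matching (alg3_E' V F E W) M2"
  shows "alg3_TI V F E W M1 = alg3_TI V F E W M2" "alg3_TO V F E W M1 = alg3_TO V F E W M2"
    "alg3_TC V F E W M1 = alg3_TC V F E W M2"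
proof -
  interpret m1: bipartite_matching "V - W" F "alg3_E' V F E W" M1
    using bipartite_matching_alg3[OF fin bip max1] .
  interpret m2: bipartite_matching "V - W" F "alg3_E' V F E W" M2
    using bipartite_matching_alg3[OF fin bip max2] .
  show TI: "alg3_TI V F E W M1 = alg3_TI V F E W M2"
    unfolding alg3_parts_eq using TI_independent_of_matching max1 max2 m1.bipartite_matching_axioms
      m2.bipartite_matching_axioms by blast
  have "alt_reach ((alg3_E' V F E W)\<inverse>) (M1\<inverse>) (unmatched F (M1\<inverse>)) =
      alt_reach ((alg3_E' V F E W)\<inverse>) (M2\<inverse>) (unmatched F (M2\<inverse>))"
    using TI_independent_of_matching[OF m1.converse_matching m2.converse_matching] max1 max2 by simp
  then show TO: "alg3_TO V F E W M1 = alg3_TO V F E W M2" unfolding alg3_parts_eq by simp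
  show "alg3_TC V F E W M1 = alg3_TC V F E W M2" using TI TO by (simp add: alg3_parts_eq(3))
qed

lemma alg3_complete_part_self_contained:
  assumes fin: "finite V" "finite F" and bip: "bipartite V F E"
    and max: "max_matching (alg3_E' V F E W) M"
  defines "TC \<equiv> alg3_TC V F E W M"
  shows "bipartite_graph (V \<inter> TC) (F \<inter> TC) (E \<inter> (TC \<times> TC))"
    "bipartite_graph.self_contained_part (V \<inter> TC) (F \<inter> TC) (E \<inter> (TC \<times> TC)) TC"
proof -
  interpret bipartite_matching "V - W" F "alg3_E' V F E W" M
    using bipartite_matching_alg3[OF fin bip max] .
  show graph: "bipartite_graph (V \<inter> TC) (F \<inter> TC) (E \<inter> (TC \<times> TC))"
    using fin bip unfolding bipartite_graph_def bipartite_def by auto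
  have TC: "TC = (V - W \<union> F) - TI - TO" unfolding TC_def alg3_parts_eq ..
  have "TC = (V \<inter> TC) \<union> (F \<inter> TC)" unfolding TC by blast
  moreover have "M \<inter> (TC \<times> TC) \<subseteq> E \<inter> (TC \<times> TC)"
    using matching_subset_edges unfolding alg3_E'_def by blast
  moreover have "\<exists>y\<in>(V \<inter> TC) \<union> (F \<inter> TC). (x, y) \<in> M \<inter> (TC \<times> TC) \<or> (y, x) \<in> M \<inter> (TC \<times> TC)"
    if "x \<in> (V \<inter> TC) \<union> (F \<inter> TC)" for x
    using matched_outside_TI_TO[of x] that unfolding TC by blast
  ultimately show "bipartite_graph.self_contained_part (V \<inter> TC) (F \<inter> TC) (E \<inter> (TC \<times> TC)) TC"
    using bipartite_graph.self_contained_part_if_perfect_matching[OF graph, of TC "M \<inter> (TC \<times> TC)"]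
      matching_subset[OF _ matching_M] by (metis inf_le1 subset_refl)
qed

lemma alg1_on_complete_part:
  assumes fin: "finite V" "finite F" and bip: "bipartite V F E"
    and max: "max_matching (alg3_E' V F E W) M"
  defines "TC \<equiv> alg3_TC V F E W M"
  shows "alg1_well_defined (V \<inter> TC) (F \<inter> TC) (E \<inter> (TC \<times> TC)) {}"
    "\<exists>!out. alg1_output (V \<inter> TC) (F \<inter> TC) (E \<inter> (TC \<times> TC)) {} out"
    "alg1_output (V \<inter> TC) (F \<inter> TC) (E \<inter> (TC \<times> TC)) {} out \<Longrightarrow> partition_on TC (fst out)"
proof -
  interpret C: bipartite_graph "V \<inter> TC" "F \<inter> TC" "E \<inter> (TC \<times> TC)"
    using alg3_complete_part_self_contained(1)[OF fin bip max] unfolding TC_def .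
  have "TC = (V \<inter> TC) \<union> (F \<inter> TC)"
    using bipartite_matching.TI_subset[OF bipartite_matching_alg3[OF fin bip max]]
    unfolding TC_def alg3_parts_eq by blast
  moreover have "C.self_contained_part TC"
    using alg3_complete_part_self_contained(2)[OF fin bip max] unfolding TC_def .
  ultimately have sc: "C.self_contained_part ((V \<inter> TC) \<union> (F \<inter> TC))" by simp
  show "alg1_well_defined (V \<inter> TC) (F \<inter> TC) (E \<inter> (TC \<times> TC)) {}"
    using C.alg1_well_defined_if_self_contained[OF sc] .
  show "\<exists>!out. alg1_output (V \<inter> TC) (F \<inter> TC) (E \<inter> (TC \<times> TC)) {} out"
    using C.alg1_output_unique_if_self_contained[OF sc] .
  show "alg1_output (V \<inter> TC) (F \<inter> TC) (E \<inter> (TC \<times> TC)) {} out \<Longrightarrow> partition_on TC (fst out)"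
    using C.alg1_output_partition[OF sc] \<open>TC = _\<close> by simp
qed

lemma alg3_output_for_unique:
  assumes fin: "finite V" "finite F" and bip: "bipartite V F E"
    and max: "max_matching (alg3_E' V F E W) M"
  shows "\<exists>!out. alg3_output_for V F E W M out"
  unfolding alg3_output_for_def Let_def
  using alg1_on_complete_part(2)[OF fin bip max] by (rule ex1_pair_image)

lemma alg3_output_for_partition:
  assumes fin: "finite V" "finite F" and bip: "bipartite V F E" and W: "W \<subseteq> V"
    and max: "max_matching (alg3_E' V F E W) M" and out: "alg3_output_for V F E W M out"
  shows "partition_on (V \<union> F) (fst out)"
proof -
  interpret bipartite_matching "V - W" F "alg3_E' V F E W" M
    using bipartite_matching_alg3[OF fin bip max] .
  define TC where "TC = alg3_TC V F E W M"
  obtain VC EC where VC: "alg1_output (V \<inter> TC) (F \<inter> TC) (E \<inter> (TC \<times> TC)) {} (VC, EC)"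
    and fst_out: "fst out = components TI (E \<inter> (TI \<times> TI)) \<union> VC \<union> components TO (E \<inter> (TO \<times> TO))
      \<union> (\<lambda>w. {w}) ` W"
    using out unfolding alg3_output_for_def Let_def TC_def alg3_parts_eq(1,2) by auto
  have TC: "TC = (V - W \<union> F) - TI - TO" unfolding TC_def alg3_parts_eq ..
  have TO: "TO \<subseteq> V - W \<union> F" using bipartite_matching.TI_subset[OF converse_matching] by auto
  have "partition_on TC VC"
    using alg1_on_complete_part(3)[OF fin bip max VC[unfolded TC_def]] unfolding TC_def by simp
  moreover have "TI \<inter> TC = {}" "(TI \<union> TC) \<inter> TO = {}"
    using TC TI_TO_disjoint[OF max] by blast+
  moreover have "(TI \<union> TC \<union> TO) \<inter> W = {}"
    using TI_subset TO TC W bip unfolding bipartite_def by blast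
  ultimately have "partition_on (TI \<union> TC \<union> TO \<union> W) (fst out)"
    unfolding fst_out
    by (intro partition_on_Un partition_components partition_on_singletons) simp_all
  moreover have "TI \<union> TC \<union> TO \<union> W = V \<union> F" using TI_subset TO W TC by auto
  ultimately show ?thesis by simp
qed

lemma alg3_output_for_independent_of_matching:
  assumes fin: "finite V" "finite F" and bip: "bipartite V F E"
    and max1: "max_matching (alg3_E' V F E W) M1" and max2: "max_matching (alg3_E' V F E W) M2"
  shows "alg3_output_for V F E W M1 = alg3_output_for V F E W M2"
  unfolding alg3_output_for_def
  using alg3_coarse_decomposition_unique[OF fin bip max1 max2] by simp

lemma alg3_output_eq_output_for:
  assumes fin: "finite V" "finite F" and bip: "bipartite V F E"
    and max: "max_matching (alg3_E' V F E W) M"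
  shows "alg3_output V F E W = alg3_output_for V F E W M"
proof
  fix out
  show "alg3_output V F E W out = alg3_output_for V F E W M out"
  proof
    assume "alg3_output V F E W out"
    then obtain M' where "max_matching (alg3_E' V F E W) M'" "alg3_output_for V F E W M' out"
      unfolding alg3_output_def by blast
    then show "alg3_output_for V F E W M out"
      using alg3_output_for_independent_of_matching[OF fin bip _ max] by simp
  qed (use max in \<open>auto simp: alg3_output_def\<close>)
qed

theorem corollary11:
  fixes V F W :: "'a set" and E :: "('a \<times> 'a) set"
  assumes "finite V" and "finite F" and "bipartite V F E" and "W \<subseteq> V"
  shows "alg3_well_defined V F E W \<and> (\<exists>!out. alg3_output V F E W out)"
proof -
  have "alg3_E' V F E W \<subseteq> V \<times> F" using assms(3) unfolding bipartite_def alg3_E'_def by blast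
  then obtain M0 where M0: "max_matching (alg3_E' V F E W) M0"
    using max_matching_exists finite_subset assms(1,2) by blast
  have "alg3_well_defined V F E W"
    unfolding alg3_well_defined_def Let_def
  proof (intro conjI allI impI)
    show "\<exists>M. max_matching (alg3_E' V F E W) M" using M0 by blast
    fix M assume max: "max_matching (alg3_E' V F E W) M"
    show "alg1_well_defined (V \<inter> alg3_TC V F E W M) (F \<inter> alg3_TC V F E W M)
        (E \<inter> (alg3_TC V F E W M \<times> alg3_TC V F E W M)) {}"
      using alg1_on_complete_part(1)[OF assms(1-3) max] .
    show "partition_on (V \<union> F) (fst out)" if "alg3_output_for V F E W M out" for out
      using alg3_output_for_partition[OF assms max that] .
  qed
  then show ?thesis
    using alg3_output_for_unique[OF assms(1-3) M0] alg3_output_eq_output_for[OF assms(1-3) M0] by simp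
qed

end
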